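(* Under the hypotheses of Theorem 1 (DMC $P_{Y|X}$ with finite alphabets, $C>0$, a capacity-achieving input distribution with full support, $B<\infty$, and $\rho_N>0$ with $\rho_N\to0$ and $\rho_N\sqrt N\to\infty$), the optimal moderate deviations constant satisfies $E^*\le B/C$.
   Context: $C=\max_{P_X}I(X;Y)$, $B=\max_{x,x'}D(P_{Y|X}(\cdot|x)\|P_{Y|X}(\cdot|x'))$. An $(M,N)$-VLF code: uniform message $W$ on $\{1,\dots,M\}$, encoders $X_n=f_n(W,Y^{n-1})$ with $Y_n\sim P_{Y|X}(\cdot|X_n)$ given the past, decoders $g_n:\mathcal{Y}^n\to\{1,\dots,M\}$, and a stopping time $\tau$ of $\{\sigma(Y^n)\}$ with $\mathbb{E}\tau\le N$; $\hat W=g_\tau(Y^\tau)$, $\mathsf{P}_{\mathrm e}(R_N,N)=\mathbb{P}(\hat W\neq W)$, $R_N=\frac1N\ln M_N$. $E^*$ is the supremum of all $E\ge0$ for which there is a family of $(M_N,N)$-VLF codes with $R_N\ge C-\rho_N$, $\mathsf{P}_{\mathrm e}(R_N,N)\to0$ and $\liminf_N -\ln\mathsf{P}_{\mathrm e}(R_N,N)/(N\rho_N)\ge E$. *)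

theory Defs
  imports Complex_Main "HOL-Library.Extended_Real" "HOL-Library.Liminf_Limsup"
begin

text \<open>A DMC with finite input type 'x and finite output type 'y is a stochastic
  matrix W, W x y = P_{Y|X}(y|x).\<close>

definition stoch_matrix :: "('x::finite \<Rightarrow> 'y::finite \<Rightarrow> real) \<Rightarrow> bool" where
  "stoch_matrix W \<longleftrightarrow> (\<forall>x y. 0 \<le> W x y) \<and> (\<forall>x. (\<Sum>y\<in>UNIV. W x y) = 1)"

definition input_dists :: "('x::finite \<Rightarrow> real) set" where
  "input_dists = {P. (\<forall>x. 0 \<le> P x) \<and> (\<Sum>x\<in>UNIV. P x) = 1}"

definition out_dist :: "('x::finite \<Rightarrow> real) \<Rightarrow> ('x \<Rightarrow> 'y \<Rightarrow> real) \<Rightarrow> 'y \<Rightarrow> real" where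
  "out_dist P W y = (\<Sum>x\<in>UNIV. P x * W x y)"

text \<open>Mutual information I(X;Y) in nats (terms with P x * W x y = 0 vanish).\<close>
definition mutual_info :: "('x::finite \<Rightarrow> real) \<Rightarrow> ('x \<Rightarrow> 'y::finite \<Rightarrow> real) \<Rightarrow> real" where
  "mutual_info P W = (\<Sum>x\<in>UNIV. \<Sum>y\<in>UNIV. P x * W x y * ln (W x y / out_dist P W y))"

definition capacity :: "('x::finite \<Rightarrow> 'y::finite \<Rightarrow> real) \<Rightarrow> real" where
  "capacity W = (SUP P\<in>input_dists. mutual_info P W)"

definition kl_div :: "('y::finite \<Rightarrow> real) \<Rightarrow> ('y \<Rightarrow> real) \<Rightarrow> ereal" where
  "kl_div p q = (if \<exists>y. 0 < p y \<and> q y = 0 then \<infinity>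
                 else ereal (\<Sum>y\<in>UNIV. p y * ln (p y / q y)))"

definition max_kl :: "('x::finite \<Rightarrow> 'y::finite \<Rightarrow> real) \<Rightarrow> ereal" where
  "max_kl W = Max {kl_div (W x) (W x') | x x'. True}"

text \<open>A VLF code with M messages (message set {1..M}) is given by
  an encoder enc w ys = f_n(w, y^{n-1}) where n - 1 = length ys,
  a decoder dec ys = g_n(y^n) where n = length ys,
  and a stopping rule stop: tau = least n with stop (y^n).\<close>

definition path_prob ::
  "('x \<Rightarrow> 'y \<Rightarrow> real) \<Rightarrow> (nat \<Rightarrow> 'y list \<Rightarrow> 'x) \<Rightarrow> nat \<Rightarrow> 'y list \<Rightarrow> real" where
  "path_prob W enc w ys = (\<Prod>i<length ys. W (enc w (take i ys)) (ys ! i))"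

definition stops_at :: "('y list \<Rightarrow> bool) \<Rightarrow> 'y list \<Rightarrow> bool" where
  "stops_at stop ys \<longleftrightarrow> stop ys \<and> (\<forall>k<length ys. \<not> stop (take k ys))"

definition stop_prob ::
  "('x \<Rightarrow> 'y::finite \<Rightarrow> real) \<Rightarrow> nat \<Rightarrow> (nat \<Rightarrow> 'y list \<Rightarrow> 'x) \<Rightarrow> ('y list \<Rightarrow> bool) \<Rightarrow> nat \<Rightarrow> real" where
  "stop_prob W M enc stop n =
     (\<Sum>w\<in>{1..M}. \<Sum>ys\<in>{ys::'y list. length ys = n}.
        (if stops_at stop ys then path_prob W enc w ys / real M else 0))"

definition err_prob_at ::
  "('x \<Rightarrow> 'y::finite \<Rightarrow> real) \<Rightarrow> nat \<Rightarrow> (nat \<Rightarrow> 'y list \<Rightarrow> 'x) \<Rightarrow> ('y list \<Rightarrow> nat)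
     \<Rightarrow> ('y list \<Rightarrow> bool) \<Rightarrow> nat \<Rightarrow> real" where
  "err_prob_at W M enc dec stop n =
     (\<Sum>w\<in>{1..M}. \<Sum>ys\<in>{ys::'y list. length ys = n}.
        (if stops_at stop ys \<and> dec ys \<noteq> w then path_prob W enc w ys / real M else 0))"

definition err_prob ::
  "('x \<Rightarrow> 'y::finite \<Rightarrow> real) \<Rightarrow> nat \<Rightarrow> (nat \<Rightarrow> 'y list \<Rightarrow> 'x) \<Rightarrow> ('y list \<Rightarrow> nat)
     \<Rightarrow> ('y list \<Rightarrow> bool) \<Rightarrow> real" where
  "err_prob W M enc dec stop = (\<Sum>n. err_prob_at W M enc dec stop n)"

definition is_VLF_code ::
  "('x \<Rightarrow> 'y::finite \<Rightarrow> real) \<Rightarrow> nat \<Rightarrow> real \<Rightarrow> (nat \<Rightarrow> 'y list \<Rightarrow> 'x) \<Rightarrow> ('y list \<Rightarrow> nat)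
     \<Rightarrow> ('y list \<Rightarrow> bool) \<Rightarrow> bool" where
  "is_VLF_code W M N enc dec stop \<longleftrightarrow>
     1 \<le> M \<and> (\<forall>ys. dec ys \<in> {1..M}) \<and>
     (stop_prob W M enc stop sums 1) \<and>
     summable (\<lambda>n. real n * stop_prob W M enc stop n) \<and>
     (\<Sum>n. real n * stop_prob W M enc stop n) \<le> N"

definition md_exponent :: "real \<Rightarrow> real \<Rightarrow> real \<Rightarrow> ereal" where
  "md_exponent pe N r = (if pe = 0 then \<infinity> else ereal (- ln pe / (N * r)))"

definition md_achievable :: "('x::finite \<Rightarrow> 'y::finite \<Rightarrow> real) \<Rightarrow> (nat \<Rightarrow> real) \<Rightarrow> real \<Rightarrow> bool" where
  "md_achievable W \<rho> E \<longleftrightarrow> 0 \<le> E \<and>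
     (\<exists>(Ms :: nat \<Rightarrow> nat) (encs :: nat \<Rightarrow> nat \<Rightarrow> 'y list \<Rightarrow> 'x) decs stops.
        (\<forall>N\<ge>1. is_VLF_code W (Ms N) (real N) (encs N) (decs N) (stops N) \<and>
                 ln (real (Ms N)) / real N \<ge> capacity W - \<rho> N) \<and>
        (\<lambda>N. err_prob W (Ms N) (encs N) (decs N) (stops N)) \<longlonglongrightarrow> 0 \<and>
        ereal E \<le> liminf (\<lambda>N. md_exponent (err_prob W (Ms N) (encs N) (decs N) (stops N))
                                             (real N) (\<rho> N)))"

definition E_star :: "('x::finite \<Rightarrow> 'y::finite \<Rightarrow> real) \<Rightarrow> (nat \<Rightarrow> real) \<Rightarrow> ereal" where
  "E_star W \<rho> = Sup (ereal ` {E. md_achievable W \<rho> E})"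

end

theory Submission
  imports Defs
begin

text \<open>Follow the posterior of the message along the tree of output sequences (a Burnashev-type
  argument). Until the posterior first puts mass \<open>1 - \<delta>\<close> on a single message, the posterior
  entropy decreases on average by at most \<open>C\<close> per channel use; afterwards the log-odds
  \<open>E[ln (1 / (1 - p\<^sub>W))]\<close> of the true message increases on average by at most \<open>B\<close> per use.
  So the potential \<open>B \<cdot> (negative entropy frozen at the concentration time) + C \<cdot> (log-odds
  gained since)\<close> grows by at most \<open>B C\<close> per step, and telescoping over the tree truncated at a horizon bounds
  its terminal value by \<open>B C E[\<tau>] \<le> B C N\<close>. At the leaves a small error probability forces
  small entropy and large log-odds, which gives \<open>C ln (1 / P\<^sub>e) \<lesssim> B C N - B ln M\<close>. With
  \<open>ln M \<ge> N (C - \<rho>\<^sub>N)\<close>, \<open>\<delta> = \<rho>\<^sub>N\<^sup>2\<close> and \<open>P\<^sub>e \<le> exp (- E N \<rho>\<^sub>N)\<close>,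
  dividing by \<open>N \<rho>\<^sub>N\<close> leaves \<open>C E - B \<le> o(1)\<close>.\<close>

section \<open>Elementary inequalities\<close>

lemma ln_one_div: "0 \<le> (x::real) \<Longrightarrow> ln (1 / x) = - ln x"
  by (cases "x = 0") (auto simp: ln_div)

lemma mult_neg_ln_one_minus_div:
  fixes z q :: real
  assumes "0 \<le> q" "q \<le> z"
  shows "z * ((q / z) * (- ln (1 - q / z))) = q * ln (z / (z - q))"
proof (cases "z = 0")
  case True thus ?thesis using assms by simp
next
  case False
  hence zp: "0 < z" using assms by linarith
  define x where "x = (z - q) / z"
  have x1: "1 - q / z = x" using zp by (simp add: x_def diff_divide_distrib)
  have x2: "z / (z - q) = 1 / x" by (simp add: x_def)
  have x0: "0 \<le> x" using assms zp by (simp add: x_def)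
  have "- ln (1 - q / z) = ln (z / (z - q))"
    unfolding x1 x2 ln_one_div[OF x0] ..
  thus ?thesis using zp by simp
qed

lemma mult_ln_one_div_le: "0 < p \<Longrightarrow> p * ln (1 / p) \<le> 1 - (p::real)"
proof -
  assume p: "0 < p"
  have "ln (1 / p) \<le> 1 / p - 1" using p by (intro ln_le_minus_one) simp
  hence "p * ln (1 / p) \<le> p * (1 / p - 1)" using p by (simp add: mult_left_mono)
  moreover have "p * (1 / p - 1) = 1 - p" using p by (simp add: right_diff_distrib)
  ultimately show ?thesis by linarith
qed

lemma quarter_power4_le_exp: "0 \<le> y \<Longrightarrow> (y / 4) ^ 4 \<le> exp (y::real)"
proof -
  assume y: "0 \<le> y"
  have "y / 4 \<le> exp (y / 4)" using exp_ge_add_one_self[of "y/4"] by linarith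
  hence "(y / 4) ^ 4 \<le> exp (y / 4) ^ 4" using y by (intro power_mono) auto
  also have "exp (y / 4) ^ 4 = exp (real 4 * (y / 4))" by (rule exp_of_nat_mult[symmetric])
  finally show ?thesis by simp
qed

lemma jensen_ln_sum:
  fixes a z :: "'i \<Rightarrow> real"
  assumes "finite I" "\<And>i. i \<in> I \<Longrightarrow> 0 \<le> a i" "\<And>i. i \<in> I \<Longrightarrow> 0 < z i" "sum a I = 1"
  shows "(\<Sum>i\<in>I. a i * ln (z i)) \<le> ln (\<Sum>i\<in>I. a i * z i)"
proof -
  define m where "m = (\<Sum>i\<in>I. a i * z i)"
  have mpos: "0 < m"
  proof -
    obtain j where j: "j \<in> I" "0 < a j" using assms(2,4)
      by (metis order_le_less sum.neutral zero_neq_one)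
    have "a j * z j \<le> m" unfolding m_def
      using assms(1,2,3) j by (intro member_le_sum) (auto intro: mult_nonneg_nonneg less_imp_le)
    moreover have "0 < a j * z j" using j assms(3) by auto
    ultimately show ?thesis by linarith
  qed
  have "\<And>i. i \<in> I \<Longrightarrow> a i * ln (z i) \<le> a i * (ln m + z i / m - 1)"
  proof -
    fix i assume i: "i \<in> I"
    have "ln (z i / m) \<le> z i / m - 1" using assms(3)[OF i] mpos by (intro ln_le_minus_one) auto
    hence "ln (z i) \<le> ln m + z i / m - 1" using assms(3)[OF i] mpos by (simp add: ln_div)
    thus "a i * ln (z i) \<le> a i * (ln m + z i / m - 1)" using assms(2)[OF i] by (rule mult_left_mono)
  qed
  hence "(\<Sum>i\<in>I. a i * ln (z i)) \<le> (\<Sum>i\<in>I. a i * (ln m + z i / m - 1))" by (rule sum_mono)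
  also have "\<dots> = ln m * sum a I + (\<Sum>i\<in>I. a i * z i) / m - sum a I"
    by (simp add: algebra_simps sum.distrib sum_subtractf sum_distrib_left sum_divide_distrib)
  also have "\<dots> = ln m" using assms(4) mpos by (simp add: m_def)
  finally show ?thesis by (simp add: m_def)
qed

lemma ln_ratio_mean_le_mean_ln_ratio:
  fixes q b :: "'a \<Rightarrow> real"
  assumes "finite V" "\<And>v. v \<in> V \<Longrightarrow> 0 < q v" "\<And>v. v \<in> V \<Longrightarrow> 0 < b v" "0 < a" "0 < sum q V"
  shows "ln (a * sum q V / (\<Sum>v\<in>V. q v * b v)) \<le> (\<Sum>v\<in>V. (q v / sum q V) * ln (a / b v))"
proof -
  define Q where "Q = sum q V"
  have pos: "0 < (\<Sum>v\<in>V. q v * b v)"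
    using assms(1-3,5) by (intro sum_pos) (auto simp: Q_def)
  have "(\<Sum>v\<in>V. (q v / Q) * ln (b v / a)) \<le> ln (\<Sum>v\<in>V. (q v / Q) * (b v / a))"
    using assms by (intro jensen_ln_sum) (auto simp: Q_def sum_divide_distrib[symmetric] less_imp_le)
  also have "(\<Sum>v\<in>V. (q v / Q) * (b v / a)) = (\<Sum>v\<in>V. q v * b v) / (a * Q)"
    by (simp add: sum_divide_distrib mult.commute)
  also have "ln \<dots> = - ln (a * Q / (\<Sum>v\<in>V. q v * b v))"
    using pos assms(4,5) by (simp add: Q_def ln_div)
  also have "(\<Sum>v\<in>V. (q v / Q) * ln (b v / a)) = - (\<Sum>v\<in>V. (q v / Q) * ln (a / b v))"
    unfolding sum_negf[symmetric] using assms(3,4)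
    by (intro sum.cong) (auto simp: ln_div diff_divide_distrib right_diff_distrib)
  finally show ?thesis by (simp add: Q_def)
qed

lemma share_after_bounded_update_le:
  fixes q Q a R delta lam :: real
  assumes "0 \<le> q" "0 \<le> a" "0 \<le> R" "0 \<le> delta" "delta \<le> 1" "1 \<le> lam"
    and share: "q \<le> (1 - delta) * (q + Q)" and update: "Q * a \<le> lam * R"
  shows "q * a \<le> (1 - delta / lam) * (q * a + R)"
proof -
  have "delta * q \<le> (1 - delta) * Q" using share by (simp add: algebra_simps)
  hence "delta / lam * (q * a) \<le> (1 - delta) * (Q * a / lam)"
    using assms(2,6) by (simp add: divide_right_mono mult_right_mono mult.assoc[symmetric])
  also have "\<dots> \<le> (1 - delta) * R"
    using update assms(5,6) by (intro mult_left_mono) (simp_all add: divide_le_eq mult.commute)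
  also have "\<dots> \<le> (1 - delta / lam) * R"
    using assms(3,4,6) mult_left_mono[of 1 lam delta]
    by (intro mult_right_mono) (simp_all add: divide_le_eq)
  finally show ?thesis by (simp add: algebra_simps)
qed

section \<open>Channel constants\<close>

lemma bounded_likelihood_ratio:
  fixes W :: "'x::finite \<Rightarrow> 'y::finite \<Rightarrow> real"
  assumes nonneg: "\<And>x y. 0 \<le> W x y" and abs_cont: "\<And>x x' y. 0 < W x y \<Longrightarrow> W x' y \<noteq> 0"
  obtains lam where "1 \<le> lam" "\<And>x x' y. W x y \<le> lam * W x' y"
proof
  define lam where "lam = Max (insert 1 ((\<lambda>(x, x', y). W x y / W x' y) ` UNIV))"
  show "1 \<le> lam" unfolding lam_def by (intro Max_ge) auto
  fix x x' y
  show "W x y \<le> lam * W x' y"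
  proof (cases "W x' y = 0")
    case True
    hence "W x y = 0" using abs_cont[of x y x'] nonneg[of x y] by force
    thus ?thesis using True by simp
  next
    case False
    hence p: "0 < W x' y" using nonneg[of x' y] by linarith
    have "W x y / W x' y \<le> lam" unfolding lam_def by (intro Max_ge) (auto intro!: image_eqI[where x="(x, x', y)"])
    thus ?thesis using p by (simp add: pos_divide_le_eq mult.commute)
  qed
qed

lemma finite_max_kl:
  fixes W :: "'x::finite \<Rightarrow> 'y::finite \<Rightarrow> real"
  assumes fin: "max_kl W < \<infinity>"
  obtains B where "max_kl W = ereal B" "0 \<le> B"
    "\<And>x x'. (\<Sum>y\<in>UNIV. W x y * ln (W x y / W x' y)) \<le> B"
    "\<And>x x' y. 0 < W x y \<Longrightarrow> W x' y \<noteq> 0"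
proof -
  define Ks where "Ks = {kl_div (W x) (W x') | x x'. True}"
  have finK: "finite Ks"
  proof -
    have "Ks = (\<lambda>(x, x'). kl_div (W x) (W x')) ` UNIV" by (auto simp: Ks_def)
    thus ?thesis by simp
  qed
  have kle: "kl_div (W x) (W x') \<le> max_kl W" for x x'
    unfolding max_kl_def Ks_def[symmetric] using finK by (intro Max_ge) (auto simp: Ks_def)
  have fin_kl: "kl_div (W x) (W x') \<noteq> \<infinity>" for x x' using kle[of x x'] fin by auto
  have kd: "kl_div (W x) (W x') = ereal (\<Sum>y\<in>UNIV. W x y * ln (W x y / W x' y))"
    and cs: "0 < W x y \<Longrightarrow> W x' y \<noteq> 0" for x x' y
    using fin_kl[of x x'] by (auto simp: kl_div_def split: if_splits)
  have "max_kl W \<in> Ks" unfolding max_kl_def Ks_def[symmetric] using finK by (rule Max_in) (auto simp: Ks_def)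
  then obtain x0 x0' where "max_kl W = kl_div (W x0) (W x0')" by (auto simp: Ks_def)
  define B where "B = (\<Sum>y\<in>UNIV. W x0 y * ln (W x0 y / W x0' y))"
  have mB: "max_kl W = ereal B" using \<open>max_kl W = kl_div (W x0) (W x0')\<close> kd by (simp add: B_def)
  have KL: "(\<Sum>y\<in>UNIV. W x y * ln (W x y / W x' y)) \<le> B" for x x'
    using kle[of x x'] kd[of x x'] mB by simp
  moreover have "0 \<le> B" using KL[of x0 x0] by (simp add: sum.neutral)
  ultimately show ?thesis using that mB cs by blast
qed

lemma mutual_info_le_card:
  fixes W :: "'x::finite \<Rightarrow> 'y::finite \<Rightarrow> real"
  assumes stoch: "stoch_matrix W" and P: "P \<in> input_dists"
  shows "mutual_info P W \<le> real (card (UNIV :: 'x set))"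
proof -
  have Wn: "\<And>x y. 0 \<le> W x y" and Ws: "\<And>x. (\<Sum>y\<in>UNIV. W x y) = 1"
    using stoch by (auto simp: stoch_matrix_def)
  have Pn: "\<And>x. 0 \<le> P x" using P by (simp add: input_dists_def)
  have tm: "P x * W x y * ln (W x y / out_dist P W y) \<le> P x * W x y * ln (1 / P x)" for x y
  proof (cases "P x * W x y = 0")
    case True thus ?thesis by (simp only: True mult_zero_left order_refl)
  next
    case False
    hence pw: "0 < P x * W x y" using Pn[of x] Wn[of x y] by (simp add: less_le)
    hence px: "0 < P x" and wx: "0 < W x y" using Pn[of x] Wn[of x y] by (auto simp: zero_less_mult_iff)
    have "P x * W x y \<le> out_dist P W y" unfolding out_dist_def
      by (rule member_le_sum[of x UNIV "\<lambda>x. P x * W x y"]) (auto simp: Pn Wn)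
    hence op: "0 < out_dist P W y" using pw by linarith
    have "W x y / out_dist P W y \<le> W x y / (P x * W x y)"
      using \<open>P x * W x y \<le> out_dist P W y\<close> pw wx by (intro divide_left_mono) auto
    also have "\<dots> = 1 / P x" using wx by simp
    finally have "ln (W x y / out_dist P W y) \<le> ln (1 / P x)" using op wx px by simp
    thus ?thesis using pw by (intro mult_left_mono) auto
  qed
  have px1: "P x * ln (1 / P x) \<le> 1" for x
  proof (cases "P x = 0")
    case True thus ?thesis by simp
  next
    case False
    hence "0 < P x" using Pn[of x] by linarith
    thus ?thesis using mult_ln_one_div_le[of "P x"] by linarith
  qed
  have "mutual_info P W \<le> (\<Sum>x\<in>UNIV. \<Sum>y\<in>UNIV. P x * W x y * ln (1 / P x))"
    unfolding mutual_info_def by (intro sum_mono tm)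
  also have "\<dots> = (\<Sum>x\<in>UNIV. P x * ln (1 / P x))"
  proof (rule sum.cong[OF refl])
    fix x
    have "(\<Sum>y\<in>UNIV. P x * W x y * ln (1 / P x)) = P x * ln (1 / P x) * (\<Sum>y\<in>UNIV. W x y)"
      by (simp add: sum_distrib_left sum_distrib_right mult.commute mult.left_commute)
    thus "(\<Sum>y\<in>UNIV. P x * W x y * ln (1 / P x)) = P x * ln (1 / P x)" by (simp add: Ws)
  qed
  also have "\<dots> \<le> (\<Sum>x\<in>(UNIV::'x set). 1)" by (intro sum_mono px1)
  finally show ?thesis by simp
qed

lemma mutual_info_le_capacity:
  fixes W :: "'x::finite \<Rightarrow> 'y::finite \<Rightarrow> real"
  assumes stoch: "stoch_matrix W" and P: "P \<in> input_dists"
  shows "mutual_info P W \<le> capacity W"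
  unfolding capacity_def
proof (rule cSUP_upper[OF P])
  show "bdd_above ((\<lambda>P. mutual_info P W) ` input_dists)"
    using mutual_info_le_card[OF stoch] by (intro bdd_aboveI[of _ "real (card (UNIV :: 'x set))"]) auto
qed

lemma err_prob_at_nonneg_le_stop_prob:
  fixes W :: "'x \<Rightarrow> 'y::finite \<Rightarrow> real"
  assumes "\<And>x y. 0 \<le> W x y"
  shows "0 \<le> err_prob_at W M enc dec stop n" "err_prob_at W M enc dec stop n \<le> stop_prob W M enc stop n"
  unfolding err_prob_at_def stop_prob_def path_prob_def using assms
  by (auto intro!: sum_nonneg sum_mono divide_nonneg_nonneg prod_nonneg)

lemma summable_err_prob_at:
  fixes W :: "'x \<Rightarrow> 'y::finite \<Rightarrow> real"
  assumes "\<And>x y. 0 \<le> W x y" and "stop_prob W M enc stop sums 1"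
  shows "summable (err_prob_at W M enc dec stop)"
  by (rule summable_comparison_test'[OF sums_summable[OF assms(2)], of 0])
     (use err_prob_at_nonneg_le_stop_prob[where W=W, OF assms(1)] in auto)

lemma err_prob_nonneg:
  fixes W :: "'x \<Rightarrow> 'y::finite \<Rightarrow> real"
  assumes "\<And>x y. 0 \<le> W x y" and "stop_prob W M enc stop sums 1"
  shows "0 \<le> err_prob W M enc dec stop"
  unfolding err_prob_def using summable_err_prob_at[OF assms] err_prob_at_nonneg_le_stop_prob(1)[where W=W, OF assms(1)]
  by (intro suminf_nonneg) auto

section \<open>Sums over a stopped tree of output sequences\<close>

lemma sum_length_Suc:
  "(\<Sum>ys\<in>{ys::'y::finite list. length ys = Suc n}. f ys) =
   (\<Sum>ys\<in>{ys. length ys = n}. \<Sum>y\<in>UNIV. f (ys @ [y]))"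
proof -
  have img: "{ys::'y list. length ys = Suc n} = (\<lambda>(ys,y). ys @ [y]) ` ({ys. length ys = n} \<times> UNIV)"
  proof (rule set_eqI, rule iffI)
    fix zs :: "'y list" assume "zs \<in> {ys. length ys = Suc n}"
    hence "length zs = Suc n" by simp
    then obtain ys y where "zs = ys @ [y]" by (metis length_Suc_conv_rev)
    thus "zs \<in> (\<lambda>(ys,y). ys @ [y]) ` ({ys. length ys = n} \<times> UNIV)"
      using \<open>length zs = Suc n\<close> by (auto intro!: image_eqI[where x="(ys,y)"])
  qed auto
  have inj: "inj_on (\<lambda>(ys,y). ys @ [y]) ({ys::'y list. length ys = n} \<times> UNIV)"
    by (auto simp: inj_on_def)
  have "(\<Sum>ys\<in>{ys::'y::finite list. length ys = Suc n}. f ys) =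
        (\<Sum>p\<in>{ys. length ys = n} \<times> UNIV. f ((\<lambda>(ys,y). ys @ [y]) p))"
    unfolding img by (rule sum.reindex[OF inj, unfolded comp_def])
  also have "\<dots> = (\<Sum>ys\<in>{ys. length ys = n}. \<Sum>y\<in>UNIV. f (ys @ [y]))"
    by (simp add: sum.cartesian_product split_def)
  finally show ?thesis .
qed

definition unstopped :: "('y list \<Rightarrow> bool) \<Rightarrow> 'y list \<Rightarrow> bool" where
  "unstopped S ys \<longleftrightarrow> (\<forall>k<length ys. \<not> S (take k ys))"

lemma unstopped_Nil[simp]: "unstopped S []" by (simp add: unstopped_def)

lemma unstopped_snoc: "unstopped S (ys @ [y]) \<longleftrightarrow> unstopped S ys \<and> \<not> S ys"
proof -
  have "(\<forall>k<Suc (length ys). \<not> S (take k (ys @ [y]))) \<longleftrightarrow>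
        (\<forall>k<length ys. \<not> S (take k ys)) \<and> \<not> S ys"
    by (auto simp: less_Suc_eq)
  thus ?thesis by (simp add: unstopped_def)
qed

lemma sum_unstopped_telescope:
  fixes F :: "'y::finite list \<Rightarrow> real"
  shows "(\<Sum>ys\<in>{ys. length ys = n}. if unstopped S ys then F ys else 0) =
     F [] + (\<Sum>k<n. \<Sum>ys\<in>{ys. length ys = k}. if unstopped S ys \<and> \<not> S ys then (\<Sum>y\<in>UNIV. F (ys @ [y])) - F ys else 0)
          - (\<Sum>k<n. \<Sum>ys\<in>{ys. length ys = k}. if unstopped S ys \<and> S ys then F ys else 0)"
proof (induction n)
  case 0
  have "{ys :: 'y list. length ys = 0} = {[]}" by auto
  thus ?case by simp
next
  case (Suc n)
  let ?L = "\<lambda>n. (\<Sum>ys\<in>{ys::'y list. length ys = n}. if unstopped S ys then F ys else 0)"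
  have "?L (Suc n) = (\<Sum>ys\<in>{ys. length ys = n}. \<Sum>y\<in>UNIV. if unstopped S (ys @ [y]) then F (ys @ [y]) else 0)"
    by (rule sum_length_Suc)
  also have "\<dots> = (\<Sum>ys\<in>{ys. length ys = n}. if unstopped S ys \<and> \<not> S ys then (\<Sum>y\<in>UNIV. F (ys @ [y])) else 0)"
    by (rule sum.cong) (auto simp: unstopped_snoc)
  also have "\<dots> = (\<Sum>ys\<in>{ys. length ys = n}. if unstopped S ys \<and> \<not> S ys then (\<Sum>y\<in>UNIV. F (ys @ [y])) - F ys else 0)
     + ?L n - (\<Sum>ys\<in>{ys. length ys = n}. if unstopped S ys \<and> S ys then F ys else 0)"
    by (simp add: sum.distrib[symmetric] sum_subtractf[symmetric] if_distrib cong: if_cong)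
       (rule sum.cong, auto)
  finally show ?case using Suc.IH by simp
qed

definition stopped_sum :: "('y::finite list \<Rightarrow> bool) \<Rightarrow> nat \<Rightarrow> ('y list \<Rightarrow> real) \<Rightarrow> real" where
  "stopped_sum S K f = (\<Sum>k\<le>K. \<Sum>ys\<in>{ys. length ys = k}. if unstopped S ys \<and> S ys then f ys else 0)"

definition running_sum :: "('y::finite list \<Rightarrow> bool) \<Rightarrow> nat \<Rightarrow> ('y list \<Rightarrow> real) \<Rightarrow> real" where
  "running_sum S K f = (\<Sum>k\<le>K. \<Sum>ys\<in>{ys. length ys = k}. if unstopped S ys \<and> \<not> S ys then f ys else 0)"

lemma stopped_sum_telescope:
  fixes F :: "'y::finite list \<Rightarrow> real"
  assumes horizon: "\<And>ys. K \<le> length ys \<Longrightarrow> S ys"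
  shows "stopped_sum S K F = F [] + running_sum S K (\<lambda>ys. (\<Sum>y\<in>UNIV. F (ys @ [y])) - F ys)"
proof -
  have "(\<Sum>ys\<in>{ys. length ys = Suc K}. if unstopped S ys then F ys else 0) = 0"
  proof (rule sum.neutral, rule ballI)
    fix ys :: "'y list" assume "ys \<in> {ys. length ys = Suc K}"
    hence "K < length ys" "length (take K ys) = K" by auto
    hence "\<not> unstopped S ys" using horizon[of "take K ys"] by (auto simp: unstopped_def)
    thus "(if unstopped S ys then F ys else 0) = 0" by simp
  qed
  moreover have "{..<Suc K} = {..K}" by auto
  ultimately show ?thesis using sum_unstopped_telescope[where S=S and n="Suc K" and F=F]
    unfolding stopped_sum_def running_sum_def by simp
qed

lemma stopped_sum_mono: "(\<And>ys. f ys \<le> g ys) \<Longrightarrow> stopped_sum S K f \<le> stopped_sum S K g"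
  unfolding stopped_sum_def by (intro sum_mono) auto

lemma running_sum_mono: "(\<And>ys. f ys \<le> g ys) \<Longrightarrow> running_sum S K f \<le> running_sum S K g"
  unfolding running_sum_def by (intro sum_mono) auto

lemma stopped_sum_diff:
  "stopped_sum S K (\<lambda>ys. a * f ys - b * g ys) = a * stopped_sum S K f - b * stopped_sum S K g"
proof -
  have "\<And>ys P. (if P then a * f ys - b * g ys else 0) = a * (if P then f ys else 0) - b * (if P then g ys else 0)"
    by simp
  thus ?thesis unfolding stopped_sum_def by (simp add: sum_subtractf sum_distrib_left)
qed

lemma running_sum_cmult: "running_sum S K (\<lambda>ys. c * f ys) = c * running_sum S K f"
proof -
  have "\<And>ys P. (if P then c * f ys else 0) = c * (if P then f ys else 0)" by simp
  thus ?thesis unfolding running_sum_def by (simp add: sum_distrib_left)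
qed

lemma running_sum_zero: "running_sum S K (\<lambda>ys. 0) = 0"
  unfolding running_sum_def by simp

definition truncate_stop :: "('y list \<Rightarrow> bool) \<Rightarrow> nat \<Rightarrow> 'y list \<Rightarrow> bool" where
  "truncate_stop stop K ys = (stop ys \<or> K \<le> length ys)"

lemma unstopped_truncate_stop:
  "length ys \<le> K \<Longrightarrow> unstopped (truncate_stop stop K) ys \<longleftrightarrow> unstopped stop ys"
  by (auto simp: unstopped_def truncate_stop_def)

section \<open>The posterior along the output tree\<close>

text \<open>\<open>lik w ys\<close> is the probability of the output prefix \<open>ys\<close> given message \<open>w\<close>, so \<open>Z ys\<close> is \<open>M\<close>
  times its unconditional probability and \<open>post w ys\<close> is the posterior of \<open>w\<close>.\<close>

locale posterior_tree =
  fixes W :: "'x::finite \<Rightarrow> 'y::finite \<Rightarrow> real" and enc :: "nat \<Rightarrow> 'y list \<Rightarrow> 'x"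
    and M :: nat and lam :: real
  assumes stoch: "stoch_matrix W" and ratio: "\<And>x x' y. W x y \<le> lam * W x' y" and M2: "2 \<le> M"
begin

lemma W_nonneg: "0 \<le> W x y" using stoch by (simp add: stoch_matrix_def)
lemma W_sum: "(\<Sum>y\<in>UNIV. W x y) = 1" using stoch by (simp add: stoch_matrix_def)
lemma W_pos_imp_pos: "0 < W x y \<Longrightarrow> 0 < W x' y"
  using ratio[of x y x'] W_nonneg[of x' y]
  by (metis less_eq_real_def mult_zero_right order_less_le_trans)

definition "lik w ys = path_prob W enc w ys"
definition "Z ys = (\<Sum>w\<in>{1..M}. lik w ys)"
definition "post w ys = lik w ys / Z ys"

lemma lik_Nil[simp]: "lik w [] = 1" by (simp add: lik_def path_prob_def)

lemma lik_snoc: "lik w (ys @ [y]) = lik w ys * W (enc w ys) y"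
proof -
  have "lik w (ys @ [y]) = (\<Prod>i<Suc (length ys). W (enc w (take i (ys @ [y]))) ((ys @ [y]) ! i))"
    by (simp add: lik_def path_prob_def)
  also have "\<dots> = (\<Prod>i<length ys. W (enc w (take i (ys @ [y]))) ((ys @ [y]) ! i)) * W (enc w ys) y"
    by (simp add: prod.lessThan_Suc)
  also have "(\<Prod>i<length ys. W (enc w (take i (ys @ [y]))) ((ys @ [y]) ! i)) = lik w ys"
    unfolding lik_def path_prob_def by (rule prod.cong) (auto simp: nth_append)
  finally show ?thesis .
qed

lemma lik_nonneg: "0 \<le> lik w ys"
  by (induction ys rule: rev_induct) (auto simp: lik_snoc W_nonneg)

lemma Z_nonneg: "0 \<le> Z ys" unfolding Z_def by (rule sum_nonneg) (simp add: lik_nonneg)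

lemma lik_le_Z: "w \<in> {1..M} \<Longrightarrow> lik w ys \<le> Z ys"
  unfolding Z_def by (rule member_le_sum) (auto simp: lik_nonneg)

lemma Z_Nil[simp]: "Z [] = real M" by (simp add: Z_def)

lemma Z_snoc: "Z (ys @ [y]) = (\<Sum>w\<in>{1..M}. lik w ys * W (enc w ys) y)"
  by (simp add: Z_def lik_snoc)

lemma sum_Z_snoc: "(\<Sum>y\<in>UNIV. Z (ys @ [y])) = Z ys"
proof -
  have "(\<Sum>y\<in>UNIV. Z (ys @ [y])) = (\<Sum>w\<in>{1..M}. lik w ys * (\<Sum>y\<in>UNIV. W (enc w ys) y))"
    by (simp add: Z_snoc sum.swap[of _ UNIV] sum_distrib_left)
  thus ?thesis by (simp add: W_sum Z_def)
qed

lemma lik_eq_0_if_Z_eq_0: "Z ys = 0 \<Longrightarrow> w \<in> {1..M} \<Longrightarrow> lik w ys = 0"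
  using lik_le_Z[of w ys] lik_nonneg[of w ys] by linarith

lemma lik_pos_if_Z_pos: "0 < Z ys \<Longrightarrow> w \<in> {1..M} \<Longrightarrow> 0 < lik w ys"
proof (induction ys arbitrary: w rule: rev_induct)
  case Nil thus ?case by simp
next
  case (snoc y ys)
  have "\<exists>v\<in>{1..M}. 0 < lik v ys * W (enc v ys) y"
  proof (rule ccontr)
    assume "\<not> ?thesis"
    hence "Z (ys @ [y]) \<le> 0" unfolding Z_snoc by (intro sum_nonpos) (auto simp: not_less)
    thus False using snoc.prems(1) by linarith
  qed
  then obtain v where v: "v \<in> {1..M}" "0 < lik v ys * W (enc v ys) y" by blast
  hence qv: "0 < lik v ys" and Wv: "0 < W (enc v ys) y"
    using lik_nonneg[of v ys] W_nonneg[of "enc v ys" y]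
    by (auto simp: zero_less_mult_iff)
  have "0 < Z ys" using lik_le_Z[OF v(1), of ys] qv by linarith
  hence "0 < lik w ys" using snoc.IH snoc.prems(2) by blast
  moreover have "0 < W (enc w ys) y" using W_pos_imp_pos[OF Wv] .
  ultimately show ?case by (simp add: lik_snoc)
qed

lemma Z_pos_prefix: "0 < Z (ys @ zs) \<Longrightarrow> 0 < Z ys"
proof (induction zs rule: rev_induct)
  case Nil thus ?case by simp
next
  case (snoc z zs)
  have "M \<ge> 1" using M2 by simp
  hence "1 \<in> {1..M}" by simp
  have "0 < lik 1 (ys @ zs @ [z])" using lik_pos_if_Z_pos snoc.prems \<open>1 \<in> {1..M}\<close> by simp
  hence "0 < lik 1 (ys @ zs)" using lik_nonneg[of 1 "ys @ zs"] W_nonneg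
    by (metis append_assoc lik_snoc less_eq_real_def mult_zero_left)
  hence "0 < Z (ys @ zs)" using lik_le_Z[OF \<open>1 \<in> {1..M}\<close>] by (meson less_le_trans)
  thus ?case using snoc.IH by blast
qed

lemma Z_pos_take: "0 < Z ys \<Longrightarrow> 0 < Z (take k ys)"
  using Z_pos_prefix[of "take k ys" "drop k ys"] by simp

lemma sum_post: "0 < Z ys \<Longrightarrow> (\<Sum>w\<in>{1..M}. post w ys) = 1"
  by (simp add: post_def sum_divide_distrib[symmetric] Z_def)

lemma post_pos: "0 < Z ys \<Longrightarrow> w \<in> {1..M} \<Longrightarrow> 0 < post w ys"
  by (simp add: post_def lik_pos_if_Z_pos)

lemma post_less_1: "0 < Z ys \<Longrightarrow> w \<in> {1..M} \<Longrightarrow> post w ys < 1"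
proof -
  assume Z: "0 < Z ys" and w: "w \<in> {1..M}"
  define v where "v = (if w = 1 then 2 else (1::nat))"
  have v: "v \<in> {1..M}" "v \<noteq> w" using M2 w by (auto simp: v_def)
  have "post w ys + post v ys \<le> (\<Sum>u\<in>{1..M}. post u ys)"
  proof -
    have "(\<Sum>u\<in>{w,v}. post u ys) \<le> (\<Sum>u\<in>{1..M}. post u ys)"
      using v w Z by (intro sum_mono2) (auto simp: post_pos less_imp_le)
    thus ?thesis using v by simp
  qed
  thus ?thesis using sum_post[OF Z] post_pos[OF Z v(1)] by linarith
qed

lemma post_nonneg: "0 \<le> post w ys" by (simp add: post_def lik_nonneg Z_nonneg)

definition "neg_entropy ys = (\<Sum>w\<in>{1..M}. post w ys * ln (post w ys))"
definition "induced_input ys x = (\<Sum>w\<in>{w\<in>{1..M}. enc w ys = x}. lik w ys) / Z ys"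

lemma Z_mult_neg_entropy: "Z ys * neg_entropy ys = (\<Sum>w\<in>{1..M}. lik w ys * ln (lik w ys / Z ys))"
proof (cases "Z ys = 0")
  case True thus ?thesis by (simp add: neg_entropy_def)
next
  case False thus ?thesis by (simp add: neg_entropy_def post_def sum_distrib_left)
qed

lemma sum_group_by_input:
  "(\<Sum>x\<in>UNIV. (\<Sum>w\<in>{w\<in>{1..M}. enc w ys = x}. lik w ys) * h x) =
   (\<Sum>w\<in>{1..M}. lik w ys * h (enc w ys))"
proof -
  have "(\<Sum>x\<in>UNIV. (\<Sum>w\<in>{w\<in>{1..M}. enc w ys = x}. lik w ys) * h x) =
        (\<Sum>x\<in>UNIV. (\<Sum>w\<in>{w\<in>{1..M}. enc w ys = x}. lik w ys * h (enc w ys)))"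
    by (simp add: sum_distrib_right)
  also have "\<dots> = (\<Sum>w\<in>{1..M}. lik w ys * h (enc w ys))"
    by (rule sum.group) auto
  finally show ?thesis .
qed

lemma induced_input_in_input_dists: "0 < Z ys \<Longrightarrow> induced_input ys \<in> input_dists"
proof -
  assume Z: "0 < Z ys"
  have "(\<Sum>x\<in>UNIV. induced_input ys x) = (\<Sum>x\<in>UNIV. (\<Sum>w\<in>{w\<in>{1..M}. enc w ys = x}. lik w ys) * (1 / Z ys))"
    by (simp add: induced_input_def)
  also have "\<dots> = (\<Sum>w\<in>{1..M}. lik w ys * (1 / Z ys))" by (rule sum_group_by_input)
  also have "\<dots> = (\<Sum>w\<in>{1..M}. lik w ys) / Z ys" by (simp add: sum_divide_distrib)
  also have "\<dots> = 1" using Z unfolding Z_def by simp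
  finally show ?thesis using Z unfolding input_dists_def induced_input_def
    by (auto intro!: divide_nonneg_pos sum_nonneg lik_nonneg)
qed

lemma out_dist_induced_input:
  "0 < Z ys \<Longrightarrow> out_dist (induced_input ys) W y = Z (ys @ [y]) / Z ys"
proof -
  assume Z: "0 < Z ys"
  have "out_dist (induced_input ys) W y = (\<Sum>x\<in>UNIV. (\<Sum>w\<in>{w\<in>{1..M}. enc w ys = x}. lik w ys) * (W x y / Z ys))"
    by (simp add: out_dist_def induced_input_def)
  also have "\<dots> = (\<Sum>w\<in>{1..M}. lik w ys * (W (enc w ys) y / Z ys))" by (rule sum_group_by_input)
  also have "\<dots> = Z (ys @ [y]) / Z ys" by (simp add: Z_snoc sum_divide_distrib)
  finally show ?thesis .
qed

lemma Z_mult_mutual_info_induced_input: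
  "0 < Z ys \<Longrightarrow> Z ys * mutual_info (induced_input ys) W =
   (\<Sum>w\<in>{1..M}. lik w ys * (\<Sum>y\<in>UNIV. W (enc w ys) y * ln (W (enc w ys) y / (Z (ys @ [y]) / Z ys))))"
proof -
  assume Z: "0 < Z ys"
  have "mutual_info (induced_input ys) W = (\<Sum>x\<in>UNIV. (\<Sum>w\<in>{w\<in>{1..M}. enc w ys = x}. lik w ys) *
      ((\<Sum>y\<in>UNIV. W x y * ln (W x y / (Z (ys @ [y]) / Z ys))) / Z ys))"
    unfolding mutual_info_def
  proof (rule sum.cong[OF refl])
    fix x
    have "(\<Sum>y\<in>UNIV. induced_input ys x * W x y * ln (W x y / out_dist (induced_input ys) W y)) =
      induced_input ys x * (\<Sum>y\<in>UNIV. W x y * ln (W x y / (Z (ys @ [y]) / Z ys)))"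
      by (simp add: out_dist_induced_input[OF Z] sum_distrib_left mult.assoc)
    thus "(\<Sum>y\<in>UNIV. induced_input ys x * W x y * ln (W x y / out_dist (induced_input ys) W y)) =
      (\<Sum>w\<in>{w\<in>{1..M}. enc w ys = x}. lik w ys) * ((\<Sum>y\<in>UNIV. W x y * ln (W x y / (Z (ys @ [y]) / Z ys))) / Z ys)"
      by (simp add: induced_input_def)
  qed
  also have "\<dots> = (\<Sum>w\<in>{1..M}. lik w ys * ((\<Sum>y\<in>UNIV. W (enc w ys) y * ln (W (enc w ys) y / (Z (ys @ [y]) / Z ys))) / Z ys))"
    by (rule sum_group_by_input)
  finally show ?thesis using Z by (simp add: sum_distrib_left sum_divide_distrib)
qed

lemma neg_entropy_drift:
  assumes Z: "0 < Z ys"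
  shows "(\<Sum>y\<in>UNIV. Z (ys @ [y]) * neg_entropy (ys @ [y])) - Z ys * neg_entropy ys = Z ys * mutual_info (induced_input ys) W"
proof -
  have tm: "lik w ys * W (enc w ys) y * ln (lik w ys * W (enc w ys) y / Z (ys @ [y])) =
      lik w ys * ln (lik w ys / Z ys) * W (enc w ys) y +
      lik w ys * (W (enc w ys) y * ln (W (enc w ys) y / (Z (ys @ [y]) / Z ys)))"
    if w: "w \<in> {1..M}" for w y
  proof (cases "W (enc w ys) y = 0")
    case True thus ?thesis by simp
  next
    case False
    hence Wp: "0 < W (enc w ys) y" using W_nonneg[of "enc w ys" y] by linarith
    have qp: "0 < lik w ys" using lik_pos_if_Z_pos[OF Z w] .
    have "lik w (ys @ [y]) \<le> Z (ys @ [y])" using lik_le_Z[OF w] .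
    hence mp: "0 < Z (ys @ [y])" using qp Wp by (simp add: lik_snoc) (smt (verit) mult_pos_pos)
    have "lik w ys * W (enc w ys) y / Z (ys @ [y]) = (lik w ys / Z ys) * (W (enc w ys) y / (Z (ys @ [y]) / Z ys))"
      using Z mp by (simp add: field_simps)
    moreover have "0 < lik w ys / Z ys" "0 < W (enc w ys) y / (Z (ys @ [y]) / Z ys)"
      using Z mp qp Wp by auto
    ultimately have "ln (lik w ys * W (enc w ys) y / Z (ys @ [y])) = ln (lik w ys / Z ys) + ln (W (enc w ys) y / (Z (ys @ [y]) / Z ys))"
      using ln_mult_pos by presburger
    thus ?thesis by (simp add: algebra_simps)
  qed
  have "(\<Sum>y\<in>UNIV. Z (ys @ [y]) * neg_entropy (ys @ [y])) =
        (\<Sum>y\<in>UNIV. \<Sum>w\<in>{1..M}. lik w ys * W (enc w ys) y * ln (lik w ys * W (enc w ys) y / Z (ys @ [y])))"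
    by (simp add: Z_mult_neg_entropy lik_snoc)
  also have "\<dots> = (\<Sum>y\<in>UNIV. \<Sum>w\<in>{1..M}. lik w ys * ln (lik w ys / Z ys) * W (enc w ys) y +
      lik w ys * (W (enc w ys) y * ln (W (enc w ys) y / (Z (ys @ [y]) / Z ys))))"
    by (intro sum.cong refl tm) 
  also have "\<dots> = (\<Sum>w\<in>{1..M}. lik w ys * ln (lik w ys / Z ys) * (\<Sum>y\<in>UNIV. W (enc w ys) y)) +
      (\<Sum>w\<in>{1..M}. lik w ys * (\<Sum>y\<in>UNIV. W (enc w ys) y * ln (W (enc w ys) y / (Z (ys @ [y]) / Z ys))))"
    by (simp add: sum.distrib sum.swap[of _ UNIV] sum_distrib_left)
  also have "\<dots> = Z ys * neg_entropy ys + Z ys * mutual_info (induced_input ys) W"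
    by (simp add: W_sum Z_mult_neg_entropy Z_mult_mutual_info_induced_input[OF Z])
  finally show ?thesis by simp
qed

definition "log_odds ys = (\<Sum>w\<in>{1..M}. post w ys * (- ln (1 - post w ys)))"

lemma Z_mult_log_odds:
  "Z ys * log_odds ys = (\<Sum>w\<in>{1..M}. lik w ys * ln (Z ys / (Z ys - lik w ys)))"
  unfolding log_odds_def sum_distrib_left post_def
  by (rule sum.cong[OF refl], rule mult_neg_ln_one_minus_div) (auto simp: lik_nonneg lik_le_Z)

lemma Z_snoc_minus_lik:
  "w \<in> {1..M} \<Longrightarrow> Z (ys @ [y]) - lik w ys * W (enc w ys) y =
   (\<Sum>v\<in>{1..M} - {w}. lik v ys * W (enc v ys) y)"
  using sum.remove[of "{1..M}" w "\<lambda>v. lik v ys * W (enc v ys) y"] by (simp add: Z_snoc)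

lemma Z_minus_lik: "w \<in> {1..M} \<Longrightarrow> Z ys - lik w ys = (\<Sum>v\<in>{1..M} - {w}. lik v ys)"
  using sum.remove[of "{1..M}" w "\<lambda>v. lik v ys"] by (simp add: Z_def)

text \<open>Splitting the logarithm at the ratio of output probabilities, the first part is bounded by
  \<open>ln t \<le> t - 1\<close> and the second by Jensen's inequality over the competing messages \<open>v \<noteq> w\<close>;
  the latter produces the relative entropies that \<open>B\<close> bounds.\<close>
lemma log_odds_increment_letter_le:
  assumes Z: "0 < Z ys" and w: "w \<in> {1..M}"
  shows "W (enc w ys) y * (ln (Z (ys @ [y]) / (Z (ys @ [y]) - lik w ys * W (enc w ys) y))
           - ln (Z ys / (Z ys - lik w ys)))
    \<le> (Z (ys @ [y]) / Z ys - W (enc w ys) y)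
       + (\<Sum>v\<in>{1..M} - {w}. (lik v ys / (Z ys - lik w ys)) *
            (W (enc w ys) y * ln (W (enc w ys) y / W (enc v ys) y)))"
    (is "?a * (ln (?Zc / ?R) - ln (Z ys / ?Q)) \<le> _")
proof (cases "?a = 0")
  case True
  thus ?thesis using Z Z_nonneg[of "ys @ [y]"] by simp
next
  case False
  define V where "V = {1..M} - {w}"
  have ap: "0 < ?a" using False W_nonneg[of "enc w ys" y] by simp
  have Qp: "0 < ?Q" using post_less_1[OF Z w] Z unfolding post_def by (simp add: field_simps)
  have QV: "?Q = (\<Sum>v\<in>V. lik v ys)" unfolding V_def by (rule Z_minus_lik[OF w])
  have RV: "?R = (\<Sum>v\<in>V. lik v ys * W (enc v ys) y)" unfolding V_def by (rule Z_snoc_minus_lik[OF w])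
  have qV: "v \<in> V \<Longrightarrow> 0 < lik v ys" for v using lik_pos_if_Z_pos[OF Z] by (auto simp: V_def)
  have WV: "v \<in> V \<Longrightarrow> 0 < W (enc v ys) y" for v using W_pos_imp_pos[OF ap] by simp
  have jensen: "ln (?a * ?Q / ?R) \<le> (\<Sum>v\<in>V. (lik v ys / ?Q) * ln (?a / W (enc v ys) y))"
    unfolding QV RV using qV WV ap Qp QV by (intro ln_ratio_mean_le_mean_ln_ratio) (auto simp: V_def)
  have "V \<noteq> {}" using Qp QV by auto
  hence Rp: "0 < ?R" unfolding RV using qV WV by (intro sum_pos) (auto simp: V_def)
  have Zcp: "0 < ?Zc" using Rp lik_pos_if_Z_pos[OF Z w] ap by (smt (verit) mult_pos_pos)
  have "ln ((?Zc / Z ys) / ?a) \<le> (?Zc / Z ys) / ?a - 1"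
    using Zcp Z ap by (intro ln_le_minus_one) simp
  hence "?a * ln ((?Zc / Z ys) / ?a) \<le> ?a * ((?Zc / Z ys) / ?a - 1)"
    using ap by (intro mult_left_mono) auto
  hence first: "?a * ln ((?Zc / Z ys) / ?a) \<le> ?Zc / Z ys - ?a"
    using ap by (simp add: field_simps)
  have "ln (?Zc / ?R) - ln (Z ys / ?Q) = ln ((?Zc / Z ys) / ?a) + ln (?a * ?Q / ?R)"
    using Zcp Rp Z Qp ap by (simp add: ln_div ln_mult_pos)
  hence "?a * (ln (?Zc / ?R) - ln (Z ys / ?Q)) = ?a * ln ((?Zc / Z ys) / ?a) + ?a * ln (?a * ?Q / ?R)"
    by (simp only: distrib_left)
  also have "\<dots> \<le> (?Zc / Z ys - ?a) + ?a * (\<Sum>v\<in>V. (lik v ys / ?Q) * ln (?a / W (enc v ys) y))"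
    using first jensen ap by (intro add_mono mult_left_mono) auto
  finally show ?thesis by (simp add: V_def sum_distrib_left mult.left_commute)
qed

lemma log_odds_increment_le:
  assumes Z: "0 < Z ys" and w: "w \<in> {1..M}"
    and KL: "\<And>x x'. (\<Sum>y\<in>UNIV. W x y * ln (W x y / W x' y)) \<le> B"
  shows "(\<Sum>y\<in>UNIV. W (enc w ys) y * ln (Z (ys @ [y]) / (Z (ys @ [y]) - lik w ys * W (enc w ys) y)))
          - ln (Z ys / (Z ys - lik w ys)) \<le> B"
proof -
  define xw where "xw = enc w ys"
  define Q where "Q = Z ys - lik w ys"
  define V where "V = {1..M} - {w}"
  have Qp: "0 < Q" using post_less_1[OF Z w] Z unfolding Q_def post_def by (simp add: field_simps)
  have QV: "Q = (\<Sum>v\<in>V. lik v ys)" unfolding Q_def V_def by (rule Z_minus_lik[OF w])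
  have qV: "v \<in> V \<Longrightarrow> 0 < lik v ys" for v using lik_pos_if_Z_pos[OF Z] by (auto simp: V_def)
  note pt = log_odds_increment_letter_le[OF Z w, folded xw_def Q_def V_def]
  have "(\<Sum>y\<in>UNIV. W xw y * ln (Z (ys @ [y]) / (Z (ys @ [y]) - lik w ys * W xw y))) - ln (Z ys / Q)
      = (\<Sum>y\<in>UNIV. W xw y * (ln (Z (ys @ [y]) / (Z (ys @ [y]) - lik w ys * W xw y)) - ln (Z ys / Q)))"
    using W_sum[of xw] by (simp add: right_diff_distrib sum_subtractf sum_distrib_right[symmetric])
  also have "\<dots> \<le> (\<Sum>y\<in>UNIV. (Z (ys @ [y]) / Z ys - W xw y) + (\<Sum>v\<in>V. (lik v ys / Q) * (W xw y * ln (W xw y / W (enc v ys) y))))"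
    by (rule sum_mono) (rule pt)
  also have "\<dots> = ((\<Sum>y\<in>UNIV. Z (ys @ [y])) / Z ys - 1) + (\<Sum>v\<in>V. (lik v ys / Q) * (\<Sum>y\<in>UNIV. W xw y * ln (W xw y / W (enc v ys) y)))"
    using W_sum[of xw]
    by (simp add: sum.distrib sum_subtractf sum_divide_distrib sum.swap[of _ UNIV V] sum_distrib_left)
  also have "\<dots> \<le> 0 + (\<Sum>v\<in>V. (lik v ys / Q) * B)"
    using Z sum_Z_snoc[of ys] qV Qp
    by (intro add_mono sum_mono mult_left_mono KL) (auto simp: less_imp_le)
  also have "\<dots> = B"
    using Qp by (simp add: sum_distrib_right[symmetric] sum_divide_distrib[symmetric] QV[symmetric])
  finally show ?thesis by (simp add: xw_def Q_def)
qed

lemma log_odds_drift: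
  assumes Z: "0 < Z ys"
    and KL: "\<And>x x'. (\<Sum>y\<in>UNIV. W x y * ln (W x y / W x' y)) \<le> B"
  shows "(\<Sum>y\<in>UNIV. Z (ys @ [y]) * log_odds (ys @ [y])) - Z ys * log_odds ys \<le> B * Z ys"
proof -
  have "(\<Sum>y\<in>UNIV. Z (ys @ [y]) * log_odds (ys @ [y])) =
        (\<Sum>y\<in>UNIV. \<Sum>w\<in>{1..M}. lik w ys * W (enc w ys) y * ln (Z (ys @ [y]) / (Z (ys @ [y]) - lik w ys * W (enc w ys) y)))"
    by (simp add: Z_mult_log_odds lik_snoc)
  also have "\<dots> = (\<Sum>w\<in>{1..M}. lik w ys * (\<Sum>y\<in>UNIV. W (enc w ys) y * ln (Z (ys @ [y]) / (Z (ys @ [y]) - lik w ys * W (enc w ys) y))))"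
    by (simp add: sum.swap[of _ UNIV] sum_distrib_left mult.assoc)
  finally have e1: "(\<Sum>y\<in>UNIV. Z (ys @ [y]) * log_odds (ys @ [y])) - Z ys * log_odds ys =
     (\<Sum>w\<in>{1..M}. lik w ys * ((\<Sum>y\<in>UNIV. W (enc w ys) y * ln (Z (ys @ [y]) / (Z (ys @ [y]) - lik w ys * W (enc w ys) y)))
          - ln (Z ys / (Z ys - lik w ys))))"
    by (simp add: Z_mult_log_odds right_diff_distrib sum_subtractf)
  also have "\<dots> \<le> (\<Sum>w\<in>{1..M}. lik w ys * B)"
    by (rule sum_mono, rule mult_left_mono, rule log_odds_increment_le[OF Z _ KL]) (auto simp: lik_nonneg)
  also have "\<dots> = B * Z ys" by (simp add: Z_def sum_distrib_left mult.commute)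
  finally show ?thesis .
qed

lemma minus_neg_entropy_eq: "- neg_entropy ys = (\<Sum>w\<in>{1..M}. post w ys * ln (1 / post w ys))"
  unfolding neg_entropy_def by (simp add: sum_negf[symmetric] ln_one_div post_nonneg)

lemma entropy_le_ln_card:
  assumes Z: "0 < Z ys"
  shows "- neg_entropy ys \<le> ln M"
proof -
  have "(\<Sum>w\<in>{1..M}. post w ys * ln (1 / post w ys)) \<le> ln (\<Sum>w\<in>{1..M}. post w ys * (1 / post w ys))"
    using post_pos[OF Z] sum_post[OF Z] by (intro jensen_ln_sum) (auto simp: less_imp_le)
  also have "(\<Sum>w\<in>{1..M}. post w ys * (1 / post w ys)) = (\<Sum>w\<in>{1..M}. 1)"
    by (rule sum.cong[OF refl]) (use post_pos[OF Z] in fastforce)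
  also have "\<dots> = real M" by simp
  finally show ?thesis by (simp add: minus_neg_entropy_eq)
qed

lemma entropy_le_if_concentrated:
  assumes Z: "0 < Z ys" and d: "d \<in> {1..M}" and pd: "1 - delta \<le> post d ys"
    and delta: "0 \<le> delta"
  shows "- neg_entropy ys \<le> delta + 1 + delta * ln M"
proof -
  define V where "V = {1..M} - {d}"
  define s where "s = (\<Sum>w\<in>V. post w ys)"
  have finV: "finite V" by (simp add: V_def)
  have pV: "w \<in> V \<Longrightarrow> 0 < post w ys" for w using post_pos[OF Z] by (auto simp: V_def)
  have split: "(\<Sum>w\<in>{1..M}. post w ys * ln (1 / post w ys)) = post d ys * ln (1 / post d ys) + (\<Sum>w\<in>V. post w ys * ln (1 / post w ys))"
    unfolding V_def using d by (simp add: sum.remove)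
  have ssum: "post d ys + s = 1" unfolding s_def V_def using d sum_post[OF Z] by (simp add: sum.remove)
  have Vne: "V \<noteq> {}"
  proof -
    define v where "v = (if d = 1 then 2 else (1::nat))"
    have "v \<in> V" using M2 d by (auto simp: v_def V_def)
    thus ?thesis by auto
  qed
  have sp: "0 < s" unfolding s_def using finV Vne pV by (intro sum_pos) auto
  have cardV: "card V \<le> M" "1 \<le> card V" using finV Vne d
    by (auto simp: V_def card_Diff_singleton card_gt_0_iff Suc_le_eq)
  have t1: "post d ys * ln (1 / post d ys) \<le> delta"
    using mult_ln_one_div_le[OF post_pos[OF Z d]] pd by linarith
  have "(\<Sum>w\<in>V. (post w ys / s) * ln (1 / post w ys)) \<le> ln (\<Sum>w\<in>V. (post w ys / s) * (1 / post w ys))"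
    using finV pV sp by (intro jensen_ln_sum) (auto simp: less_imp_le s_def sum_divide_distrib[symmetric])
  also have "(\<Sum>w\<in>V. (post w ys / s) * (1 / post w ys)) = (\<Sum>w\<in>V. 1 / s)"
    by (rule sum.cong[OF refl]) (use pV in fastforce)
  also have "\<dots> = card V / s" by simp
  finally have "(\<Sum>w\<in>V. post w ys * ln (1 / post w ys)) / s \<le> ln (card V / s)"
    by (simp add: sum_divide_distrib)
  hence "(\<Sum>w\<in>V. post w ys * ln (1 / post w ys)) \<le> s * ln (card V / s)"
    using sp by (simp add: field_simps)
  also have "\<dots> = s * ln (card V) + s * ln (1 / s)"
    using sp cardV by (simp add: ln_div algebra_simps)
  also have "\<dots> \<le> delta * ln M + 1"
  proof -
    have "ln (card V) \<le> ln M" using cardV by simp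
    moreover have "0 \<le> ln (card V)" using cardV by simp
    moreover have "s \<le> delta" using ssum pd by linarith
    ultimately have "s * ln (card V) \<le> delta * ln M"
      using mult_mono[of s delta "ln (card V)" "ln M"] sp delta by linarith
    moreover have "s * ln (1 / s) \<le> 1" using mult_ln_one_div_le[OF sp] sp by linarith
    ultimately show ?thesis by linarith
  qed
  finally show ?thesis using t1 split by (simp add: minus_neg_entropy_eq)
qed

lemma log_odds_lower:
  assumes Z: "0 < Z ys" and d: "d \<in> {1..M}"
  shows "0 < 1 - post d ys" "- ln (2 * (1 - post d ys)) \<le> log_odds ys"
proof -
  show e: "0 < 1 - post d ys" using post_less_1[OF Z d] by simp
  define S where "S = (\<Sum>w\<in>{1..M}. post w ys * (1 - post w ys))"
  have "(\<Sum>w\<in>{1..M}. post w ys * ln (1 - post w ys)) \<le> ln S"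
    unfolding S_def using post_pos[OF Z] post_less_1[OF Z] sum_post[OF Z]
    by (intro jensen_ln_sum) (auto simp: less_imp_le)
  moreover have "S \<le> 2 * (1 - post d ys)"
  proof -
    have "S = 1 - (\<Sum>w\<in>{1..M}. post w ys ^ 2)"
    proof -
      have "S = (\<Sum>w\<in>{1..M}. post w ys) - (\<Sum>w\<in>{1..M}. post w ys ^ 2)"
        unfolding S_def by (simp add: right_diff_distrib sum_subtractf power2_eq_square)
      thus ?thesis using sum_post[OF Z] by simp
    qed
    moreover have "post d ys ^ 2 \<le> (\<Sum>w\<in>{1..M}. post w ys ^ 2)"
      using d by (intro member_le_sum) auto
    moreover have "post d ys ^ 2 \<ge> 2 * post d ys - 1"
    proof -
      have "0 \<le> (post d ys - 1) ^ 2" by simp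
      thus ?thesis by (simp add: power2_eq_square algebra_simps)
    qed
    ultimately show ?thesis by (simp add: algebra_simps)
  qed
  moreover have "0 < S" unfolding S_def using post_pos[OF Z] post_less_1[OF Z]
    using M2 by (intro sum_pos) auto
  ultimately have "(\<Sum>w\<in>{1..M}. post w ys * ln (1 - post w ys)) \<le> ln (2 * (1 - post d ys))"
    using e \<open>0 < S\<close> ln_le_cancel_iff[of S "2 * (1 - post d ys)"] by linarith
  moreover have "log_odds ys = - (\<Sum>w\<in>{1..M}. post w ys * ln (1 - post w ys))"
    unfolding log_odds_def by (simp add: sum_negf[symmetric])
  ultimately show "- ln (2 * (1 - post d ys)) \<le> log_odds ys" by linarith
qed

lemma log_odds_upper:
  assumes Z: "0 < Z ys" and b: "\<And>w. w \<in> {1..M} \<Longrightarrow> post w ys \<le> 1 - c" and c: "0 < c"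
  shows "log_odds ys \<le> ln (1 / c)"
proof -
  have "log_odds ys \<le> (\<Sum>w\<in>{1..M}. post w ys * ln (1 / c))"
    unfolding log_odds_def
  proof (rule sum_mono, rule mult_left_mono)
    fix w assume w: "w \<in> {1..M}"
    have "0 < 1 - post w ys" using post_less_1[OF Z w] by simp
    hence "ln c \<le> ln (1 - post w ys)" using b[OF w] c by simp
    thus "- ln (1 - post w ys) \<le> ln (1 / c)" using c by (simp add: ln_div)
  qed (simp add: post_nonneg)
  also have "\<dots> = ln (1 / c)" using sum_post[OF Z] by (simp add: sum_distrib_right[symmetric])
  finally show ?thesis .
qed

lemma stops_at_iff_unstopped: "stops_at stop ys \<longleftrightarrow> unstopped stop ys \<and> stop ys"
  by (auto simp: stops_at_def unstopped_def)

lemma stop_prob_eq: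
  "stop_prob W M enc stop n = (\<Sum>ys\<in>{ys. length ys = n}. if stops_at stop ys then Z ys else 0) / real M"
proof -
  have "stop_prob W M enc stop n = (\<Sum>ys\<in>{ys. length ys = n}. \<Sum>w\<in>{1..M}. if stops_at stop ys then lik w ys / real M else 0)"
    unfolding stop_prob_def lik_def by (rule sum.swap)
  also have "\<dots> = (\<Sum>ys\<in>{ys. length ys = n}. (if stops_at stop ys then Z ys else 0) / real M)"
    by (rule sum.cong[OF refl]) (simp add: Z_def sum_divide_distrib)
  finally show ?thesis by (simp add: sum_divide_distrib)
qed

lemma err_prob_at_eq:
  assumes dec: "\<And>ys. dec ys \<in> {1..M}"
  shows "err_prob_at W M enc dec stop n =
    (\<Sum>ys\<in>{ys. length ys = n}. if stops_at stop ys then Z ys - lik (dec ys) ys else 0) / real M"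
proof -
  have inner: "(\<Sum>w\<in>{1..M}. if dec ys \<noteq> w then lik w ys else 0) = Z ys - lik (dec ys) ys" for ys
  proof -
    have "(\<Sum>w\<in>{1..M}. if dec ys \<noteq> w then lik w ys else 0) =
          (\<Sum>w\<in>{1..M}. lik w ys - (if dec ys = w then lik w ys else 0))"
      by (rule sum.cong) auto
    also have "\<dots> = Z ys - lik (dec ys) ys" using dec[of ys] by (simp add: sum_subtractf Z_def)
    finally show ?thesis .
  qed
  have "err_prob_at W M enc dec stop n = (\<Sum>ys\<in>{ys. length ys = n}. \<Sum>w\<in>{1..M}.
      if stops_at stop ys \<and> dec ys \<noteq> w then lik w ys / real M else 0)"
    unfolding err_prob_at_def lik_def by (rule sum.swap)
  also have "\<dots> = (\<Sum>ys\<in>{ys. length ys = n}. (if stops_at stop ys then Z ys - lik (dec ys) ys else 0) / real M)"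
    by (rule sum.cong[OF refl]) (auto simp: inner[symmetric] sum_divide_distrib intro!: sum.cong)
  finally show ?thesis by (simp add: sum_divide_distrib)
qed

lemma stop_prob_nonneg: "0 \<le> stop_prob W M enc stop n"
  by (simp add: stop_prob_eq Z_nonneg sum_nonneg)

lemma sum_unstopped_Z:
  "(\<Sum>ys\<in>{ys. length ys = n}. if unstopped stop ys then Z ys else 0) =
   real M - real M * (\<Sum>k<n. stop_prob W M enc stop k)"
proof -
  have M0: "real M \<noteq> 0" using M2 by simp
  have "(\<Sum>ys\<in>{ys. length ys = n}. if unstopped stop ys then Z ys else 0) =
      Z [] + (\<Sum>k<n. \<Sum>ys\<in>{ys. length ys = k}. if unstopped stop ys \<and> \<not> stop ys then (\<Sum>y\<in>UNIV. Z (ys @ [y])) - Z ys else 0)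
          - (\<Sum>k<n. \<Sum>ys\<in>{ys. length ys = k}. if unstopped stop ys \<and> stop ys then Z ys else 0)"
    by (rule sum_unstopped_telescope)
  also have "(\<Sum>k<n. \<Sum>ys\<in>{ys. length ys = k}. if unstopped stop ys \<and> \<not> stop ys then (\<Sum>y\<in>UNIV. Z (ys @ [y])) - Z ys else 0) = 0"
    by (intro sum.neutral ballI) (simp add: sum_Z_snoc)
  also have "Z [] + 0 - (\<Sum>k<n. \<Sum>ys\<in>{ys. length ys = k}. if unstopped stop ys \<and> stop ys then Z ys else 0)
     = real M - (\<Sum>k<n. real M * stop_prob W M enc stop k)"
    using M0 by (simp add: stop_prob_eq stops_at_iff_unstopped)
  finally show ?thesis by (simp add: sum_distrib_left)
qed

lemma sum_running_Z:
  "(\<Sum>ys\<in>{ys. length ys = n}. if unstopped stop ys \<and> \<not> stop ys then Z ys else 0) =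
   real M * (1 - (\<Sum>k<Suc n. stop_prob W M enc stop k))"
proof -
  have M0: "real M \<noteq> 0" using M2 by simp
  have "(\<Sum>ys\<in>{ys. length ys = n}. if unstopped stop ys \<and> \<not> stop ys then Z ys else 0) =
    (\<Sum>ys\<in>{ys. length ys = n}. if unstopped stop ys then Z ys else 0) - (\<Sum>ys\<in>{ys. length ys = n}. if stops_at stop ys then Z ys else 0)"
    by (simp add: sum_subtractf[symmetric] stops_at_iff_unstopped) (rule sum.cong, auto)
  also have "\<dots> = real M - real M * (\<Sum>k<n. stop_prob W M enc stop k) - real M * stop_prob W M enc stop n"
    using M0 by (simp add: sum_unstopped_Z stop_prob_eq)
  finally show ?thesis by (simp add: algebra_simps)
qed

lemma running_sum_truncate_stop:
  "running_sum (truncate_stop stop K) K Z = real M * (\<Sum>k<K. 1 - (\<Sum>j<Suc k. stop_prob W M enc stop j))"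
proof -
  have "running_sum (truncate_stop stop K) K Z = (\<Sum>k\<in>insert K {..<K}. \<Sum>ys\<in>{ys. length ys = k}.
      if unstopped (truncate_stop stop K) ys \<and> \<not> truncate_stop stop K ys then Z ys else 0)"
    unfolding running_sum_def by (simp add: lessThan_Suc_atMost[symmetric] lessThan_Suc)
  also have "\<dots> = (\<Sum>k<K. \<Sum>ys\<in>{ys. length ys = k}. if unstopped stop ys \<and> \<not> stop ys then Z ys else 0)"
  proof -
    have "(\<Sum>ys\<in>{ys. length ys = K}. if unstopped (truncate_stop stop K) ys \<and> \<not> truncate_stop stop K ys then Z ys else 0) = 0"
      by (rule sum.neutral) (auto simp: truncate_stop_def)
    moreover have "(\<Sum>ys\<in>{ys. length ys = k}. if unstopped (truncate_stop stop K) ys \<and> \<not> truncate_stop stop K ys then Z ys else 0) =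
        (\<Sum>ys\<in>{ys. length ys = k}. if unstopped stop ys \<and> \<not> stop ys then Z ys else 0)" if "k < K" for k
      using that by (intro sum.cong refl) (auto simp: unstopped_truncate_stop truncate_stop_def)
    ultimately show ?thesis by simp
  qed
  also have "\<dots> = real M * (\<Sum>k<K. 1 - (\<Sum>j<Suc k. stop_prob W M enc stop j))"
    by (simp add: sum_running_Z sum_distrib_left)
  finally show ?thesis .
qed

lemma stopped_sum_truncate_stop_error_le:
  assumes dec: "\<And>ys. dec ys \<in> {1..M}"
  shows "stopped_sum (truncate_stop stop K) K (\<lambda>ys. Z ys - lik (dec ys) ys) \<le>
    real M * (\<Sum>k\<le>K. err_prob_at W M enc dec stop k) + real M * (1 - (\<Sum>j<Suc K. stop_prob W M enc stop j))"
proof -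
  have M0: "real M \<noteq> 0" using M2 by simp
  have lev: "(\<Sum>ys\<in>{ys. length ys = k}. if unstopped (truncate_stop stop K) ys \<and> truncate_stop stop K ys then Z ys - lik (dec ys) ys else 0)
     \<le> real M * err_prob_at W M enc dec stop k + (if k = K then real M * (1 - (\<Sum>j<Suc K. stop_prob W M enc stop j)) else 0)"
    if k: "k \<le> K" for k
  proof -
    have "(\<Sum>ys\<in>{ys. length ys = k}. if unstopped (truncate_stop stop K) ys \<and> truncate_stop stop K ys then Z ys - lik (dec ys) ys else 0)
       \<le> (\<Sum>ys\<in>{ys. length ys = k}. (if stops_at stop ys then Z ys - lik (dec ys) ys else 0) +
            (if k = K then (if unstopped stop ys \<and> \<not> stop ys then Z ys else 0) else 0))"
    proof (rule sum_mono)
      fix ys :: "'y list" assume "ys \<in> {ys. length ys = k}"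
      hence l: "length ys = k" by simp
      have a: "0 \<le> Z ys - lik (dec ys) ys" using lik_le_Z[OF dec] by simp
      have b: "Z ys - lik (dec ys) ys \<le> Z ys" using lik_nonneg by simp
      show "(if unstopped (truncate_stop stop K) ys \<and> truncate_stop stop K ys then Z ys - lik (dec ys) ys else 0)
        \<le> (if stops_at stop ys then Z ys - lik (dec ys) ys else 0) +
            (if k = K then (if unstopped stop ys \<and> \<not> stop ys then Z ys else 0) else 0)"
        using l k a b by (auto simp: unstopped_truncate_stop truncate_stop_def stops_at_iff_unstopped Z_nonneg)
    qed
    also have "\<dots> = real M * err_prob_at W M enc dec stop k + (if k = K then real M * (1 - (\<Sum>j<Suc K. stop_prob W M enc stop j)) else 0)"
      using M0 by (simp add: sum.distrib err_prob_at_eq[OF dec] sum_running_Z)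
    finally show ?thesis .
  qed
  have "stopped_sum (truncate_stop stop K) K (\<lambda>ys. Z ys - lik (dec ys) ys) \<le>
      (\<Sum>k\<le>K. real M * err_prob_at W M enc dec stop k + (if k = K then real M * (1 - (\<Sum>j<Suc K. stop_prob W M enc stop j)) else 0))"
    unfolding stopped_sum_def by (rule sum_mono) (rule lev, simp)
  also have "\<dots> = real M * (\<Sum>k\<le>K. err_prob_at W M enc dec stop k) + real M * (1 - (\<Sum>j<Suc K. stop_prob W M enc stop j))"
    by (simp add: sum.distrib sum_distrib_left)
  finally show ?thesis .
qed

end

section \<open>The two-phase potential\<close>

locale posterior_tree_threshold =
  posterior_tree W enc M lam for W :: "'x::finite \<Rightarrow> 'y::finite \<Rightarrow> real" and enc M lam +
  fixes delta :: real
  assumes delta_pos: "0 < delta" and delta_le_half: "delta \<le> 1/2" and lam1: "1 \<le> lam"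
begin

text \<open>\<open>concentration_prefix ys\<close> is the shortest prefix of \<open>ys\<close> at which the posterior is
  concentrated (or \<open>ys\<close> itself if there is none): the potential freezes the entropy there and
  counts the log-odds gained since.\<close>

definition "concentrated ys = (\<exists>w\<in>{1..M}. 1 - delta \<le> post w ys)"
definition "unconcentrated_prefixes ys = (\<forall>k<length ys. \<not> concentrated (take k ys))"
definition "has_concentrated_prefix ys = (\<exists>k\<le>length ys. concentrated (take k ys))"
definition "first_concentration ys = (LEAST k. concentrated (take k ys))"
definition "concentration_prefix ys = (if has_concentrated_prefix ys then take (first_concentration ys) ys else ys)"
definition "potential B C ys = Z ys * (B * neg_entropy (concentration_prefix ys)
                                       + C * (log_odds ys - log_odds (concentration_prefix ys)))"

lemma post_snoc_le_if_not_concentrated: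
  assumes Z: "0 < Z zs" and nc: "\<not> concentrated zs" and w: "w \<in> {1..M}"
  shows "post w (zs @ [y]) \<le> 1 - delta / lam"
proof -
  define V where "V = {1..M} - {w}"
  define R where "R = (\<Sum>v\<in>V. lik v zs * W (enc v zs) y)"
  have Zc: "Z (zs @ [y]) = lik w zs * W (enc w zs) y + R"
    using Z_snoc_minus_lik[OF w, of zs y] by (simp add: R_def V_def)
  have "(Z zs - lik w zs) * W (enc w zs) y = (\<Sum>v\<in>V. lik v zs * W (enc w zs) y)"
    by (simp add: Z_minus_lik[OF w] V_def sum_distrib_right)
  also have "\<dots> \<le> (\<Sum>v\<in>V. lik v zs * (lam * W (enc v zs) y))"
    by (intro sum_mono mult_left_mono) (auto simp: ratio lik_nonneg)
  also have "\<dots> = lam * R" by (simp add: R_def sum_distrib_left mult.left_commute)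
  finally have update: "(Z zs - lik w zs) * W (enc w zs) y \<le> lam * R" .
  have "post w zs < 1 - delta" using nc w unfolding concentrated_def by force
  hence share: "lik w zs \<le> (1 - delta) * (lik w zs + (Z zs - lik w zs))"
    using Z by (simp add: post_def divide_less_eq less_imp_le mult.commute)
  have "lik w zs * W (enc w zs) y \<le> (1 - delta / lam) * Z (zs @ [y])"
    unfolding Zc using delta_pos delta_le_half lam1 share update
    by (intro share_after_bounded_update_le)
       (auto simp: lik_nonneg W_nonneg R_def intro!: sum_nonneg mult_nonneg_nonneg)
  moreover have "delta / lam \<le> 1" using delta_pos delta_le_half lam1 by (simp add: divide_le_eq)
  ultimately show ?thesis using Z_nonneg[of "zs @ [y]"]
    by (cases "Z (zs @ [y]) = 0") (auto simp: post_def lik_snoc divide_le_eq mult.commute)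
qed

lemma post_le_if_unconcentrated_prefixes:
  assumes "unconcentrated_prefixes ys" "0 < Z ys" "w \<in> {1..M}"
  shows "post w ys \<le> 1 - delta / lam"
proof (cases ys rule: rev_cases)
  case Nil
  have "delta / lam \<le> delta" using delta_pos lam1 by (simp add: divide_le_eq)
  moreover have "1 / real M \<le> 1 / 2" using M2 by (simp add: divide_le_eq)
  ultimately show ?thesis using Nil delta_le_half by (simp add: post_def)
next
  case (snoc zs y)
  have "\<not> concentrated zs"
    using assms(1) unfolding unconcentrated_prefixes_def snoc by (metis append_eq_conv_conj length_append_singleton lessI)
  moreover have "0 < Z zs" using Z_pos_prefix assms(2) snoc by blast
  ultimately show ?thesis using post_snoc_le_if_not_concentrated assms(3) snoc by blast
qed

lemma first_concentration_le:
  "has_concentrated_prefix ys \<Longrightarrow> first_concentration ys \<le> length ys"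
  unfolding has_concentrated_prefix_def first_concentration_def by (meson Least_le order_trans)

lemma concentrated_first_concentration:
  "has_concentrated_prefix ys \<Longrightarrow> concentrated (take (first_concentration ys) ys)"
  unfolding has_concentrated_prefix_def first_concentration_def by (meson LeastI)

lemma has_concentrated_prefix_snoc:
  assumes "has_concentrated_prefix ys"
  shows "has_concentrated_prefix (ys @ [y])" "concentration_prefix (ys @ [y]) = concentration_prefix ys"
proof -
  obtain k where k: "k \<le> length ys" "concentrated (take k ys)"
    using assms unfolding has_concentrated_prefix_def by blast
  show h: "has_concentrated_prefix (ys @ [y])" unfolding has_concentrated_prefix_def using k by (intro exI[of _ k]) auto
  have "first_concentration (ys @ [y]) = first_concentration ys"
    unfolding first_concentration_def
  proof (rule Least_equality)
    show "concentrated (take (LEAST k. concentrated (take k ys)) (ys @ [y]))"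
      using concentrated_first_concentration[OF assms] first_concentration_le[OF assms]
      by (simp add: first_concentration_def)
  next
    fix k' assume c: "concentrated (take k' (ys @ [y]))"
    show "(LEAST k. concentrated (take k ys)) \<le> k'"
    proof (cases "k' \<le> length ys")
      case True thus ?thesis using c by (intro Least_le) simp
    next
      case False thus ?thesis using first_concentration_le[OF assms] by (simp add: first_concentration_def)
    qed
  qed
  thus "concentration_prefix (ys @ [y]) = concentration_prefix ys"
    using h assms first_concentration_le[OF assms] by (simp add: concentration_prefix_def)
qed

lemma concentration_prefix_snoc:
  assumes "\<not> has_concentrated_prefix ys"
  shows "concentration_prefix (ys @ [y]) = ys @ [y]"
proof (cases "has_concentrated_prefix (ys @ [y])")
  case False thus ?thesis by (simp add: concentration_prefix_def)
next
  case True
  have "first_concentration (ys @ [y]) = Suc (length ys)"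
    unfolding first_concentration_def
  proof (rule Least_equality)
    obtain k where k: "k \<le> Suc (length ys)" "concentrated (take k (ys @ [y]))"
      using True unfolding has_concentrated_prefix_def by auto
    have "k = Suc (length ys)"
    proof (rule ccontr)
      assume "k \<noteq> Suc (length ys)"
      hence "k \<le> length ys" using k by simp
      thus False using assms k unfolding has_concentrated_prefix_def by auto
    qed
    thus "concentrated (take (Suc (length ys)) (ys @ [y]))" using k by simp
  next
    fix k' assume c: "concentrated (take k' (ys @ [y]))"
    show "Suc (length ys) \<le> k'"
    proof (rule ccontr)
      assume "\<not> ?thesis" hence "k' \<le> length ys" by simp
      thus False using assms c unfolding has_concentrated_prefix_def by auto
    qed
  qed
  thus ?thesis using True by (simp add: concentration_prefix_def)
qed

lemma unconcentrated_prefixes_concentration_prefix: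
  "unconcentrated_prefixes (concentration_prefix ys)"
proof (cases "has_concentrated_prefix ys")
  case True
  have "\<not> concentrated (take k (take (first_concentration ys) ys))" if "k < first_concentration ys" for k
    using not_less_Least[OF that[unfolded first_concentration_def]] that by (simp add: first_concentration_def min_def)
  thus ?thesis
    using True first_concentration_le[OF True] by (simp add: concentration_prefix_def unconcentrated_prefixes_def)
next
  case False thus ?thesis
    by (auto simp: concentration_prefix_def unconcentrated_prefixes_def has_concentrated_prefix_def)
qed

lemma concentration_prefix_cases:
  "(has_concentrated_prefix ys \<and> concentrated (concentration_prefix ys)) \<or>
   (\<not> has_concentrated_prefix ys \<and> concentration_prefix ys = ys \<and> \<not> concentrated ys)"
proof (cases "has_concentrated_prefix ys")
  case True thus ?thesis using concentrated_first_concentration by (simp add: concentration_prefix_def)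
next
  case False
  have "\<not> concentrated (take (length ys) ys)" using False unfolding has_concentrated_prefix_def by blast
  thus ?thesis using False by (simp add: concentration_prefix_def)
qed

lemma Z_pos_concentration_prefix: "0 < Z ys \<Longrightarrow> 0 < Z (concentration_prefix ys)"
  by (simp add: concentration_prefix_def Z_pos_take)

lemma potential_drift:
  assumes KL: "\<And>x x'. (\<Sum>y\<in>UNIV. W x y * ln (W x y / W x' y)) \<le> B"
    and CAP: "\<And>P. P \<in> input_dists \<Longrightarrow> mutual_info P W \<le> C"
    and B0: "0 \<le> B" and C0: "0 \<le> C"
  shows "(\<Sum>y\<in>UNIV. potential B C (ys @ [y])) - potential B C ys \<le> B * C * Z ys"
proof (cases "Z ys = 0")
  case True
  have "Z (ys @ [y]) = 0" for y
    by (simp add: Z_snoc lik_eq_0_if_Z_eq_0[OF True])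
  thus ?thesis using True by (simp add: potential_def)
next
  case False
  hence Z: "0 < Z ys" using Z_nonneg[of ys] by linarith
  show ?thesis
  proof (cases "has_concentrated_prefix ys")
    case True
    define a where "a = concentration_prefix ys"
    have ch: "potential B C (ys @ [y]) = Z (ys @ [y]) * (B * neg_entropy a - C * log_odds a) + C * (Z (ys @ [y]) * log_odds (ys @ [y]))" for y
      using has_concentrated_prefix_snoc[OF True] by (simp add: potential_def a_def algebra_simps)
    have "(\<Sum>y\<in>UNIV. potential B C (ys @ [y])) = Z ys * (B * neg_entropy a - C * log_odds a) + C * (\<Sum>y\<in>UNIV. Z (ys @ [y]) * log_odds (ys @ [y]))"
      by (simp add: ch sum.distrib sum_distrib_left[symmetric] sum_distrib_right[symmetric] sum_Z_snoc)
    moreover have "potential B C ys = Z ys * (B * neg_entropy a - C * log_odds a) + C * (Z ys * log_odds ys)"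
      by (simp add: potential_def a_def algebra_simps)
    moreover have "C * ((\<Sum>y\<in>UNIV. Z (ys @ [y]) * log_odds (ys @ [y])) - Z ys * log_odds ys) \<le> C * (B * Z ys)"
      using log_odds_drift[OF Z KL] C0 by (rule mult_left_mono)
    ultimately show ?thesis by (simp add: algebra_simps)
  next
    case False
    have ch: "potential B C (ys @ [y]) = B * (Z (ys @ [y]) * neg_entropy (ys @ [y]))" for y
      using concentration_prefix_snoc[OF False] by (simp add: potential_def)
    have p: "potential B C ys = B * (Z ys * neg_entropy ys)"
      using False by (simp add: potential_def concentration_prefix_def)
    have "(\<Sum>y\<in>UNIV. potential B C (ys @ [y])) - potential B C ys = B * ((\<Sum>y\<in>UNIV. Z (ys @ [y]) * neg_entropy (ys @ [y])) - Z ys * neg_entropy ys)"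
      by (simp add: ch p sum_distrib_left right_diff_distrib)
    also have "\<dots> = B * (Z ys * mutual_info (induced_input ys) W)" by (simp add: neg_entropy_drift[OF Z])
    also have "\<dots> \<le> B * (Z ys * C)"
      using CAP[OF induced_input_in_input_dists[OF Z]] Z B0 by (intro mult_left_mono) auto
    finally show ?thesis by (simp add: algebra_simps)
  qed
qed

lemma entropy_concentration_prefix_le:
  assumes Z: "0 < Z ys" and d: "d \<in> {1..M}"
  shows "- neg_entropy (concentration_prefix ys) \<le> delta + 1 + delta * ln M + ((1 - post d ys) / delta) * ln M"
proof (cases "has_concentrated_prefix ys")
  case True
  hence "concentrated (concentration_prefix ys)" using concentration_prefix_cases by blast
  then obtain w where w: "w \<in> {1..M}" "1 - delta \<le> post w (concentration_prefix ys)"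
    unfolding concentrated_def by blast
  have "- neg_entropy (concentration_prefix ys) \<le> delta + 1 + delta * ln M"
    using entropy_le_if_concentrated[OF Z_pos_concentration_prefix[OF Z] w] delta_pos by simp
  moreover have "0 \<le> ((1 - post d ys) / delta) * ln M"
    using post_less_1[OF Z d] delta_pos M2 by simp
  ultimately show ?thesis by linarith
next
  case False
  hence a: "concentration_prefix ys = ys" "\<not> concentrated ys" using concentration_prefix_cases by blast+
  have "delta \<le> 1 - post d ys" using a(2) d unfolding concentrated_def by force
  hence "1 * ln M \<le> ((1 - post d ys) / delta) * ln M"
    using delta_pos M2 by (intro mult_right_mono) (auto simp: le_divide_eq)
  moreover have "- neg_entropy ys \<le> ln M" by (rule entropy_le_ln_card[OF Z])
  moreover have "0 \<le> delta + 1 + delta * ln M" using delta_pos M2 by simp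
  ultimately show ?thesis unfolding a(1) by linarith
qed

lemma potential_lower:
  assumes B0: "0 \<le> B" and C0: "0 \<le> C" and eps: "0 < eps" and d: "d \<in> {1..M}"
  shows "potential B C ys \<ge> Z ys * (- B * (delta + 1 + delta * ln M) + C * (1 - ln 2 - ln eps - ln (lam / delta)))
           - (B * ln M / delta + C / eps) * (Z ys - lik d ys)"
proof (cases "Z ys = 0")
  case True thus ?thesis using lik_eq_0_if_Z_eq_0[OF True d] by (simp add: potential_def)
next
  case False
  hence Z: "0 < Z ys" using Z_nonneg[of ys] by linarith
  define a where "a = concentration_prefix ys"
  define e where "e = 1 - post d ys"
  have ep: "0 < e" and odds_ys: "- ln (2 * e) \<le> log_odds ys"
    using log_odds_lower[OF Z d] by (auto simp: e_def)
  have entropy: "- neg_entropy a \<le> delta + 1 + delta * ln M + (e / delta) * ln M"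
    unfolding a_def e_def by (rule entropy_concentration_prefix_le[OF Z d])
  have "log_odds a \<le> ln (1 / (delta / lam))" unfolding a_def
    by (intro log_odds_upper Z_pos_concentration_prefix Z post_le_if_unconcentrated_prefixes
        unconcentrated_prefixes_concentration_prefix) (use delta_pos lam1 in auto)
  moreover have "ln (e / eps) \<le> e / eps - 1" using ep eps by (intro ln_le_minus_one) simp
  ultimately have odds_gain: "1 - ln 2 - ln eps - ln (lam / delta) - e / eps \<le> log_odds ys - log_odds a"
    using odds_ys ep eps by (simp add: ln_div ln_mult_pos)
  have "B * (- (delta + 1 + delta * ln M) - (e / delta) * ln M) \<le> B * neg_entropy a"
    using entropy B0 by (intro mult_left_mono) auto
  moreover have "C * (1 - ln 2 - ln eps - ln (lam / delta) - e / eps) \<le> C * (log_odds ys - log_odds a)"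
    using odds_gain C0 by (rule mult_left_mono)
  ultimately have "(- B * (delta + 1 + delta * ln M) + C * (1 - ln 2 - ln eps - ln (lam / delta)))
      - (B * ln M / delta + C / eps) * e \<le> B * neg_entropy a + C * (log_odds ys - log_odds a)"
    by (simp add: algebra_simps)
  from mult_left_mono[OF this, of "Z ys"] Z
  have "Z ys * (- B * (delta + 1 + delta * ln M) + C * (1 - ln 2 - ln eps - ln (lam / delta)))
      - (B * ln M / delta + C / eps) * (Z ys * e) \<le> potential B C ys"
    unfolding potential_def a_def[symmetric] by (simp add: algebra_simps)
  moreover have "Z ys * e = Z ys - lik d ys" using Z by (simp add: e_def post_def right_diff_distrib)
  ultimately show ?thesis by simp
qed

lemma potential_Nil: "potential B C [] = - B * real M * ln M"
proof -
  have "concentration_prefix [] = []" by (simp add: concentration_prefix_def)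
  moreover have "neg_entropy [] = - ln M"
  proof -
    have "neg_entropy [] = (\<Sum>w\<in>{1..M}. (1 / real M) * ln (1 / real M))" by (simp add: neg_entropy_def post_def)
    also have "\<dots> = ln (1 / real M)" using M2 by simp
    finally show ?thesis using M2 by (simp add: ln_div)
  qed
  ultimately show ?thesis by (simp add: potential_def)
qed

lemma posterior_tree_bound:
  assumes horizon: "\<And>ys. K \<le> length ys \<Longrightarrow> S ys"
    and KL: "\<And>x x'. (\<Sum>y\<in>UNIV. W x y * ln (W x y / W x' y)) \<le> B"
    and CAP: "\<And>P. P \<in> input_dists \<Longrightarrow> mutual_info P W \<le> C"
    and B0: "0 \<le> B" and C0: "0 \<le> C" and eps: "0 < eps"
    and dec: "\<And>ys. dec ys \<in> {1..M}"
    and err: "stopped_sum S K (\<lambda>ys. Z ys - lik (dec ys) ys) \<le> real M * eps"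
  shows "C * ln (1 / eps) \<le> B * C * (running_sum S K Z / real M) - B * ln M + B * (delta + 1 + delta * ln M)
            + B * ln M * eps / delta + C * ln (2 * lam / delta)"
proof -
  define K0 where "K0 = - B * (delta + 1 + delta * ln M) + C * (1 - ln 2 - ln eps - ln (lam / delta))"
  define Kc where "Kc = B * ln M / delta + C / eps"
  have Mp: "0 < real M" using M2 by simp
  have lnM: "0 \<le> ln (real M)" using M2 by simp
  have Kc0: "0 \<le> Kc" unfolding Kc_def using B0 C0 eps delta_pos lnM by simp
  have tel: "stopped_sum S K (potential B C) = potential B C [] + running_sum S K (\<lambda>ys. (\<Sum>y\<in>UNIV. potential B C (ys @ [y])) - potential B C ys)"
    by (rule stopped_sum_telescope[OF horizon])
  have telZ: "stopped_sum S K Z = Z [] + running_sum S K (\<lambda>ys. (\<Sum>y\<in>UNIV. Z (ys @ [y])) - Z ys)"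
    by (rule stopped_sum_telescope[OF horizon])
  hence LZ: "stopped_sum S K Z = real M" by (simp add: sum_Z_snoc running_sum_zero)
  have up: "stopped_sum S K (potential B C) \<le> - B * real M * ln M + B * C * running_sum S K Z"
    using tel potential_Nil[of B C] running_sum_mono[of "\<lambda>ys. (\<Sum>y\<in>UNIV. potential B C (ys @ [y])) - potential B C ys" "\<lambda>ys. B * C * Z ys" S K]
      potential_drift[OF KL CAP B0 C0] by (simp add: running_sum_cmult)
  have "stopped_sum S K (\<lambda>ys. K0 * Z ys - Kc * (Z ys - lik (dec ys) ys)) \<le> stopped_sum S K (potential B C)"
    using potential_lower[OF B0 C0 eps dec] by (intro stopped_sum_mono) (simp add: K0_def Kc_def mult.commute)
  hence "K0 * real M - Kc * stopped_sum S K (\<lambda>ys. Z ys - lik (dec ys) ys) \<le> stopped_sum S K (potential B C)"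
    by (simp add: stopped_sum_diff LZ)
  moreover have "Kc * stopped_sum S K (\<lambda>ys. Z ys - lik (dec ys) ys) \<le> Kc * (real M * eps)"
    using err Kc0 by (rule mult_left_mono)
  ultimately have "K0 * real M - Kc * (real M * eps) \<le> - B * real M * ln M + B * C * running_sum S K Z"
    using up by linarith
  hence "real M * (K0 - Kc * eps) \<le> real M * (- B * ln M + B * C * (running_sum S K Z / real M))"
    using Mp by (simp add: algebra_simps)
  hence main: "K0 - Kc * eps \<le> - B * ln M + B * C * (running_sum S K Z / real M)"
    using Mp by simp
  have "Kc * eps = B * ln M * eps / delta + C" using eps by (simp add: Kc_def algebra_simps)
  moreover have "ln (2 * lam / delta) = ln 2 + ln (lam / delta)" using lam1 delta_pos
    by (simp add: ln_mult_pos[symmetric] mult.assoc)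
  moreover have "ln (1 / eps) = - ln eps" using eps by (simp add: ln_div)
  ultimately show ?thesis using main unfolding K0_def by (simp add: algebra_simps)
qed

end

section \<open>The converse for a single code\<close>

lemma sum_tail_probs_eq:
  fixes sp :: "nat \<Rightarrow> real"
  shows "(\<Sum>k<K. 1 - (\<Sum>j<Suc k. sp j)) = real K - (\<Sum>j<K. (real K - real j) * sp j)"
proof (induction K)
  case 0 thus ?case by simp
next
  case (Suc K)
  have "(\<Sum>j<Suc K. (real (Suc K) - real j) * sp j) = (\<Sum>j<Suc K. (real K - real j) * sp j) + (\<Sum>j<Suc K. sp j)"
    by (simp add: sum.distrib[symmetric] algebra_simps)
  also have "(\<Sum>j<Suc K. (real K - real j) * sp j) = (\<Sum>j<K. (real K - real j) * sp j)" by simp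
  finally show ?case using Suc.IH by simp
qed

lemma sum_tail_probs_le_mean:
  fixes sp :: "nat \<Rightarrow> real"
  assumes nn: "\<And>n. 0 \<le> sp n" and s1: "sp sums 1" and sm: "summable (\<lambda>n. real n * sp n)"
  shows "(\<Sum>k<K. 1 - (\<Sum>j<Suc k. sp j)) \<le> (\<Sum>n. real n * sp n)"
proof -
  have e: "(\<lambda>n. real K * sp n - (if n < K then (real K - real n) * sp n else 0)) sums
           (real K * 1 - (\<Sum>j<K. (real K - real j) * sp j))"
  proof (rule sums_diff)
    show "(\<lambda>n. real K * sp n) sums (real K * 1)" using s1 by (rule sums_mult)
    show "(\<lambda>n. if n < K then (real K - real n) * sp n else 0) sums (\<Sum>j<K. (real K - real j) * sp j)"
      using sums_If_finite_set[of "{..<K}" "\<lambda>n. (real K - real n) * sp n"] by simp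
  qed
  have eq: "real K * sp n - (if n < K then (real K - real n) * sp n else 0) = real (min n K) * sp n" for n
    by (cases "n < K") (auto simp: algebra_simps min_def)
  have "(\<Sum>k<K. 1 - (\<Sum>j<Suc k. sp j)) = (\<Sum>n. real (min n K) * sp n)"
    using e unfolding eq sum_tail_probs_eq by (simp add: sums_iff)
  also have "\<dots> \<le> (\<Sum>n. real n * sp n)"
    using e sm nn unfolding eq by (intro suminf_le) (auto simp: sums_iff intro: mult_right_mono)
  finally show ?thesis .
qed

lemma sums_one_partial_sum_ge:
  fixes f :: "nat \<Rightarrow> real"
  assumes "f sums 1" and "0 < u"
  obtains K where "1 - (\<Sum>j<Suc K. f j) \<le> u"
proof -
  have "\<forall>\<^sub>F n in sequentially. dist (\<Sum>j<n. f j) 1 < u"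
    using assms by (intro tendstoD) (simp_all add: sums_def)
  then obtain N0 where "\<forall>n\<ge>N0. dist (\<Sum>j<n. f j) 1 < u" by (auto simp: eventually_sequentially)
  hence "dist (\<Sum>j<Suc N0. f j) 1 < u" by (metis le_SucI order_refl)
  thus ?thesis using that[of N0] by (simp add: dist_real_def)
qed

text \<open>The stopping time is truncated at a horizon \<open>K\<close> with \<open>P(\<tau> > K) \<le> u\<close>, so that the leaves of the
  finite tree carry error mass at most \<open>2 u\<close>.\<close>

lemma vlf_code_bound:
  fixes W :: "'x::finite \<Rightarrow> 'y::finite \<Rightarrow> real" and enc :: "nat \<Rightarrow> 'y list \<Rightarrow> 'x"
  assumes stoch: "stoch_matrix W" and ratio: "\<And>x x' y. W x y \<le> lam * W x' y" and lam1: "1 \<le> lam"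
    and KL: "\<And>x x'. (\<Sum>y\<in>UNIV. W x y * ln (W x y / W x' y)) \<le> B"
    and CAP: "\<And>P. P \<in> input_dists \<Longrightarrow> mutual_info P W \<le> C"
    and B0: "0 \<le> B" and C0: "0 \<le> C"
    and code: "is_VLF_code W M N enc dec stop" and M2: "2 \<le> M"
    and delta: "0 < delta" "delta \<le> 1/2" and u: "0 < u" and pe: "err_prob W M enc dec stop \<le> u"
  shows "C * ln (1 / (2 * u)) \<le> B * C * N - B * ln M + B * (delta + 1 + delta * ln M)
            + B * ln M * (2 * u) / delta + C * ln (2 * lam / delta)"
proof -
  interpret posterior_tree_threshold W enc M lam delta
    by unfold_locales (use stoch ratio M2 delta lam1 in auto)
  let ?sp = "stop_prob W M enc stop"
  let ?er = "err_prob_at W M enc dec stop"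
  have dec: "\<And>ys. dec ys \<in> {1..M}" using code by (simp add: is_VLF_code_def)
  have s1: "?sp sums 1" and smn: "summable (\<lambda>n. real n * ?sp n)" and EN: "(\<Sum>n. real n * ?sp n) \<le> N"
    using code by (auto simp: is_VLF_code_def)
  obtain K where K: "1 - (\<Sum>j<Suc K. ?sp j) \<le> u" using sums_one_partial_sum_ge[OF s1 u] .
  have truncate_stop: "\<And>ys. K \<le> length ys \<Longrightarrow> truncate_stop stop K ys"
    by (simp add: truncate_stop_def)
  have er_le: "(\<Sum>k\<le>K. ?er k) \<le> err_prob W M enc dec stop"
    unfolding err_prob_def using summable_err_prob_at[OF W_nonneg s1] err_prob_at_nonneg_le_stop_prob(1)[OF W_nonneg]
    by (intro sum_le_suminf) auto
  have err: "stopped_sum (truncate_stop stop K) K (\<lambda>ys. Z ys - lik (dec ys) ys) \<le> real M * (2 * u)"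
  proof -
    have "stopped_sum (truncate_stop stop K) K (\<lambda>ys. Z ys - lik (dec ys) ys) \<le> real M * (\<Sum>k\<le>K. ?er k) + real M * (1 - (\<Sum>j<Suc K. ?sp j))"
      by (rule stopped_sum_truncate_stop_error_le[OF dec])
    also have "\<dots> \<le> real M * u + real M * u"
      using er_le pe K by (intro add_mono mult_left_mono) auto
    finally show ?thesis by (simp add: algebra_simps)
  qed
  have main: "C * ln (1 / (2 * u)) \<le> B * C * (running_sum (truncate_stop stop K) K Z / real M) - B * ln M + B * (delta + 1 + delta * ln M)
            + B * ln M * (2 * u) / delta + C * ln (2 * lam / delta)"
  proof (rule posterior_tree_bound[OF truncate_stop KL CAP B0 C0 _ dec err])
    show "0 < 2 * u" using u by linarith
  qed
  have "running_sum (truncate_stop stop K) K Z / real M = (\<Sum>k<K. 1 - (\<Sum>j<Suc k. ?sp j))"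
    using M2 by (simp add: running_sum_truncate_stop)
  also have "\<dots> \<le> N"
    using sum_tail_probs_le_mean[OF stop_prob_nonneg s1 smn, of K] EN by linarith
  finally have "B * C * (running_sum (truncate_stop stop K) K Z / real M) \<le> B * C * N"
    using B0 C0 by (intro mult_left_mono) auto
  thus ?thesis using main by linarith
qed

lemma le_exp_of_md_exponent:
  assumes "ereal E < md_exponent pe n r" and "0 \<le> pe" and "0 < n * r"
  shows "pe \<le> exp (- E * (n * r))"
proof (cases "pe = 0")
  case False
  hence "ereal E < ereal ((- ln pe) / (n * r))" using assms(1) by (simp add: md_exponent_def)
  hence "E < (- ln pe) / (n * r)" by simp
  hence "E * (n * r) < - ln pe" using pos_less_divide_eq[OF assms(3)] by blast
  hence "ln pe < - E * (n * r)" by simp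
  hence "exp (ln pe) < exp (- E * (n * r))" by simp
  thus ?thesis using False assms(2) by simp
qed simp

lemma exp_neg_div_cube_le:
  fixes E r n :: real
  assumes E: "0 < E" and r: "0 < r" and n: "1 \<le> n" and s1: "1 \<le> r * sqrt n"
  shows "exp (- E * (n * r)) / r^3 \<le> 256 / (E^4 * (r * sqrt n))"
proof -
  define X where "X = n * r"
  define s where "s = r * sqrt n"
  have Xp: "0 < X" using n r by (simp add: X_def)
  have sp: "1 \<le> s" using s1 by (simp add: s_def)
  have sX: "s \<le> X"
  proof -
    have "s * 1 \<le> s * sqrt n" using sp n by (intro mult_left_mono) auto
    also have "s * sqrt n = X" using n by (simp add: s_def X_def)
    finally show ?thesis by simp
  qed
  have uX: "exp (- E * X) \<le> 256 / (E * X)^4"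
  proof -
    have "((E * X) / 4) ^ 4 \<le> exp (E * X)" using E Xp by (intro quarter_power4_le_exp) simp
    moreover have "exp (- E * X) = 1 / exp (E * X)" by (simp add: exp_minus field_simps)
    moreover have "0 < ((E * X) / 4) ^ 4" using E Xp by simp
    ultimately have "exp (- E * X) \<le> 1 / ((E * X) / 4) ^ 4" by (simp add: frac_le)
    thus ?thesis by (simp add: power_divide)
  qed
  have "s \<le> X^4 * r^3"
  proof -
    have "X^4 * r^3 = (s^2)^3 * X"
      using n by (simp add: s_def X_def power_mult_distrib algebra_simps power2_eq_square power3_eq_cube power4_eq_xxxx)
    moreover have "X \<le> (s^2)^3 * X" using sp Xp by simp
    ultimately show ?thesis using sX by linarith
  qed
  hence "256 / (E^4 * (X^4 * r^3)) \<le> 256 / (E^4 * s)"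
    using E sp r by (intro divide_left_mono mult_left_mono mult_pos_pos) auto
  moreover have "exp (- E * X) / r^3 \<le> 256 / (E^4 * (X^4 * r^3))"
    using divide_right_mono[OF uX, of "r^3"] r by (simp add: power_mult_distrib)
  ultimately show ?thesis by (simp add: X_def s_def)
qed

lemma converse_bound_rearranged:
  fixes B C r n L lam u :: real
  assumes C: "0 \<le> C" and B: "0 \<le> B" and r: "0 < r" and n: "0 \<le> n" and lam: "1 \<le> lam"
    and L: "n * (C - r) \<le> L" and u: "0 \<le> u" and eta: "r^2 + 2 * u / r^2 \<le> 1"
    and ineq: "C * ln (1 / (2 * u)) \<le> B * C * n - B * L + B * (r^2 + 1 + r^2 * L) + B * L * (2 * u) / r^2
                 + C * ln (2 * lam / r^2)"
  shows "C * ln (1 / (2 * u)) \<le> B * C * n * (r^2 + 2 * u / r^2) + B * (n * r) + B * (r^2 + 1)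
           + C * ln (2 * lam) + 2 * C / r"
proof -
  define eta where "eta = r^2 + 2 * u / r^2"
  have "- B * L + B * (r^2 * L) + B * L * (2 * u) / r^2 = - (B * (1 - eta)) * L"
    using r by (simp add: eta_def field_simps)
  also have "\<dots> \<le> - (B * (1 - eta)) * (n * (C - r))"
    using B eta L by (simp add: eta_def mult_left_mono)
  also have "\<dots> \<le> - B * C * n + B * C * n * eta + B * (n * r)"
  proof -
    have "0 \<le> B * (n * r) * eta" using B n r u by (simp add: eta_def)
    thus ?thesis by (simp add: algebra_simps)
  qed
  finally have Lterms: "- B * L + B * (r^2 * L) + B * L * (2 * u) / r^2 \<le> - B * C * n + B * C * n * eta + B * (n * r)" .
  have "ln (2 * lam / r^2) = ln (2 * lam) + 2 * ln (1 / r)"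
    using r lam by (simp add: ln_div ln_mult_pos ln_realpow)
  moreover have "ln (1 / r) \<le> 1 / r" using r ln_le_minus_one[of "1/r"] by simp
  ultimately have "C * ln (2 * lam / r^2) \<le> C * (ln (2 * lam) + 2 / r)"
    using C by (intro mult_left_mono) auto
  with ineq Lterms show ?thesis by (simp add: eta_def algebra_simps)
qed

lemma exponent_bound_arith:
  fixes B C E r n L lam :: real
  assumes C: "0 < C" and B: "0 \<le> B" and E: "0 < E" and r: "0 < r" "r \<le> 1/2" and n: "1 \<le> n"
    and s1: "1 \<le> r * sqrt n" and sb: "1024 / E^4 \<le> r * sqrt n" and lam: "1 \<le> lam"
    and L: "n * (C - r) \<le> L"
    and ineq: "C * ln (1 / (2 * exp (- E * (n * r)))) \<le> B * C * n - B * L + B * (r^2 + 1 + r^2 * L)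
                 + B * L * (2 * exp (- E * (n * r))) / r^2 + C * ln (2 * lam / r^2)"
  shows "C * E - B \<le> B * C * r + (512 * B * C / E^4 + 2 * B + C * ln 2 + C * ln (2 * lam) + 2 * C) / (r * sqrt n)"
proof -
  define u where "u = exp (- E * (n * r))"
  define X where "X = n * r"
  define s where "s = r * sqrt n"
  have Xp: "0 < X" using n r by (simp add: X_def)
  have sp: "1 \<le> s" using s1 by (simp add: s_def)
  have sX: "s \<le> X"
  proof -
    have "s * 1 \<le> s * sqrt n" using sp n by (intro mult_left_mono) auto
    also have "s * sqrt n = X" using n by (simp add: s_def X_def)
    finally show ?thesis by simp
  qed
  have ur: "u / r^3 \<le> 256 / (E^4 * s)"
    unfolding u_def s_def by (rule exp_neg_div_cube_le[OF E r(1) n s1])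
  have "256 / (E^4 * s) \<le> 1/4"
    using sb E sp by (simp add: s_def divide_le_eq field_simps)
  hence "u / r^3 \<le> 1/4" using ur by linarith
  moreover have "2 * u / r^2 = 2 * r * (u / r^3)" using r by (simp add: field_simps power2_eq_square power3_eq_cube)
  ultimately have "2 * u / r^2 \<le> 2 * (1/2) * (1/4)"
    using r by (simp only:) (intro mult_mono, auto simp: u_def)
  moreover have "r^2 \<le> 1/4" using power_mono[OF r(2), of 2] r by (simp add: power2_eq_square)
  ultimately have eta: "r^2 + 2 * u / r^2 \<le> 1" by linarith
  have "C * (E * X - ln 2) \<le> B * C * n * (r^2 + 2 * u / r^2) + B * X + B * (r^2 + 1)
           + C * ln (2 * lam) + 2 * C / r"
  proof -
    have "ln (1 / (2 * u)) = E * X - ln 2" by (simp add: ln_div ln_mult_pos u_def X_def)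
    thus ?thesis using converse_bound_rearranged[OF less_imp_le[OF C] B r(1) _ lam L _ eta ineq[folded u_def]] n
      by (simp add: X_def u_def)
  qed
  hence "C * (E * X) / X \<le> (B * C * n * (r^2 + 2 * u / r^2) + B * X + B * (r^2 + 1) + C * ln 2
           + C * ln (2 * lam) + 2 * C / r) / X"
    using Xp by (intro divide_right_mono) (auto simp: algebra_simps)
  also have "\<dots> = B * C * r + 2 * B * C * (u / r^3) + B + (B * (r^2 + 1) + C * ln 2 + C * ln (2 * lam)) / X
           + 2 * C / (r * X)"
    using Xp r n by (simp add: X_def field_simps power2_eq_square power3_eq_cube)
  finally have "C * E \<le> B * C * r + 2 * B * C * (u / r^3) + B + (B * (r^2 + 1) + C * ln 2 + C * ln (2 * lam)) / X
           + 2 * C / (r * X)"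
    using Xp by simp
  moreover have "2 * B * C * (u / r^3) \<le> 512 * B * C / E^4 / s"
    using mult_left_mono[OF ur, of "2 * B * C"] B C by simp
  moreover have "(B * (r^2 + 1) + C * ln 2 + C * ln (2 * lam)) / X \<le> (2 * B + C * ln 2 + C * ln (2 * lam)) / s"
  proof -
    have "r^2 \<le> 1" using r by (simp add: power_le_one)
    hence "B * (r^2 + 1) \<le> 2 * B" using B mult_left_mono[of "r^2 + 1" 2 B] by simp
    hence "(B * (r^2 + 1) + C * ln 2 + C * ln (2 * lam)) / X \<le> (2 * B + C * ln 2 + C * ln (2 * lam)) / X"
      using Xp by (intro divide_right_mono) auto
    also have "\<dots> \<le> (2 * B + C * ln 2 + C * ln (2 * lam)) / s"
      using B C lam sX sp by (intro divide_left_mono) auto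
    finally show ?thesis .
  qed
  moreover have "2 * C / (r * X) \<le> 2 * C / s"
  proof -
    have "r * X = s^2" using n by (simp add: X_def s_def power2_eq_square)
    moreover have "s \<le> s^2" using sp by (simp add: power2_eq_square)
    ultimately show ?thesis using C sp by (intro divide_left_mono) auto
  qed
  ultimately have "C * E - B \<le> B * C * r + 512 * B * C / E^4 / s + (2 * B + C * ln 2 + C * ln (2 * lam)) / s + 2 * C / s"
    by linarith
  thus ?thesis by (simp add: s_def add_divide_distrib)
qed

lemma exponent_bound_of_code:
  fixes W :: "'x::finite \<Rightarrow> 'y::finite \<Rightarrow> real" and enc :: "nat \<Rightarrow> 'y list \<Rightarrow> 'x"
  assumes stoch: "stoch_matrix W" and ratio: "\<And>x x' y. W x y \<le> lam * W x' y" and lam1: "1 \<le> lam"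
    and KL: "\<And>x x'. (\<Sum>y\<in>UNIV. W x y * ln (W x y / W x' y)) \<le> B"
    and CAP: "\<And>P. P \<in> input_dists \<Longrightarrow> mutual_info P W \<le> C"
    and B0: "0 \<le> B" and C0: "0 < C" and E: "0 < E"
    and code: "is_VLF_code W M (real N) enc dec stop"
    and rate: "C - r \<le> ln (real M) / real N"
    and r: "0 < r" "r \<le> 1/2" "r < C" and N1: "1 \<le> N"
    and s1: "1 \<le> r * sqrt (real N)" and sb: "1024 / E^4 \<le> r * sqrt (real N)"
    and md: "ereal E < md_exponent (err_prob W M enc dec stop) (real N) r"
  shows "C * E - B \<le> B * C * r + (512 * B * C / E^4 + 2 * B + C * ln 2 + C * ln (2 * lam) + 2 * C) / (r * sqrt (real N))"
proof -
  have Np: "0 < real N" using N1 by simp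
  have L: "real N * (C - r) \<le> ln (real M)" using rate Np by (simp add: pos_le_divide_eq mult.commute)
  moreover have "0 < real N * (C - r)" using Np r by simp
  ultimately have "0 < ln (real M)" by linarith
  have M2: "2 \<le> M"
  proof (rule ccontr)
    assume "\<not> 2 \<le> M"
    hence "M = 0 \<or> M = 1" by auto
    thus False using \<open>0 < ln (real M)\<close> by auto
  qed
  have "err_prob W M enc dec stop \<le> exp (- E * (real N * r))"
    using le_exp_of_md_exponent[OF md err_prob_nonneg] stoch code Np r
    by (simp add: stoch_matrix_def is_VLF_code_def)
  moreover have "0 < r^2" "r^2 \<le> 1/2" \<comment> \<open>the concentration threshold is \<open>\<delta> = r\<^sup>2\<close>\<close>
    using r power_mono[OF r(2), of 2] by (simp_all add: power2_eq_square)
  ultimately have "C * ln (1 / (2 * exp (- E * (real N * r)))) \<le> B * C * real N - B * ln (real M)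
       + B * (r^2 + 1 + r^2 * ln (real M)) + B * ln (real M) * (2 * exp (- E * (real N * r))) / r^2
       + C * ln (2 * lam / r^2)"
    using vlf_code_bound[OF stoch ratio lam1 KL CAP B0 _ code M2] C0 by simp
  thus ?thesis using N1 by (intro exponent_bound_arith[OF C0 B0 E r(1) r(2) _ s1 sb lam1 L]) simp_all
qed

section \<open>The moderate deviations converse\<close>

lemma md_achievable_exponent_le:
  fixes W :: "'x::finite \<Rightarrow> 'y::finite \<Rightarrow> real" and \<rho> :: "nat \<Rightarrow> real"
  assumes stoch: "stoch_matrix W" and C0: "0 < capacity W"
    and ratio: "\<And>x x' y. W x y \<le> lam * W x' y" and lam1: "1 \<le> lam"
    and KL: "\<And>x x'. (\<Sum>y\<in>UNIV. W x y * ln (W x y / W x' y)) \<le> B" and B0: "0 \<le> B"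
    and rpos: "\<forall>N. 0 < \<rho> N" and r0: "\<rho> \<longlonglongrightarrow> 0"
    and rs: "filterlim (\<lambda>N. \<rho> N * sqrt (real N)) at_top sequentially"
    and ach: "md_achievable W \<rho> E" and E': "0 < E'" "E' < E"
  shows "capacity W * E' - B \<le> 0"
proof -
  define C where "C = capacity W"
  obtain Ms :: "nat \<Rightarrow> nat" and encs :: "nat \<Rightarrow> nat \<Rightarrow> 'y list \<Rightarrow> 'x" and decs stops where
    codes: "\<forall>N\<ge>1. is_VLF_code W (Ms N) (real N) (encs N) (decs N) (stops N) \<and>
               ln (real (Ms N)) / real N \<ge> C - \<rho> N"
    and lim: "ereal E \<le> liminf (\<lambda>N. md_exponent (err_prob W (Ms N) (encs N) (decs N) (stops N)) (real N) (\<rho> N))"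
    using ach unfolding md_achievable_def C_def by blast
  define K where "K = 512 * B * C / E'^4 + 2 * B + C * ln 2 + C * ln (2 * lam) + 2 * C"
  have "(\<lambda>N. B * C * \<rho> N + K * inverse (\<rho> N * sqrt (real N))) \<longlonglongrightarrow> B * C * 0 + K * 0"
    by (intro tendsto_intros r0 tendsto_inverse_0_at_top rs)
  moreover have "\<forall>\<^sub>F N in sequentially. C * E' - B \<le> B * C * \<rho> N + K * inverse (\<rho> N * sqrt (real N))"
  proof -
    have "ereal E' < liminf (\<lambda>N. md_exponent (err_prob W (Ms N) (encs N) (decs N) (stops N)) (real N) (\<rho> N))"
      using E'(2) by (intro less_le_trans[OF _ lim]) simp
    hence "\<forall>\<^sub>F N in sequentially. ereal E' < md_exponent (err_prob W (Ms N) (encs N) (decs N) (stops N)) (real N) (\<rho> N)"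
      by (rule less_LiminfD)
    moreover have "\<forall>\<^sub>F N in sequentially. \<rho> N < min (1/2) C"
      using r0 C0 by (intro order_tendstoD(2)) (auto simp: C_def)
    moreover have "\<forall>\<^sub>F N in sequentially. max 1 (1024 / E'^4) \<le> \<rho> N * sqrt (real N)"
      using rs unfolding filterlim_at_top by blast
    moreover have "\<forall>\<^sub>F N in sequentially. 1 \<le> N" by (rule eventually_ge_at_top)
    ultimately show ?thesis
    proof eventually_elim
      case (elim N)
      with codes rpos show ?case unfolding K_def divide_inverse[symmetric]
        by (intro exponent_bound_of_code[OF stoch ratio lam1 KL _ B0 _ E'(1)])
           (auto simp: C_def intro: mutual_info_le_capacity[OF stoch] C0)
    qed
  qed
  ultimately show ?thesis unfolding C_def by (intro tendsto_lowerbound) auto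
qed

theorem proposition2:
  fixes W :: "'x::finite \<Rightarrow> 'y::finite \<Rightarrow> real" and \<rho> :: "nat \<Rightarrow> real"
  assumes "stoch_matrix W"
    and "capacity W > 0"
    and "\<exists>P\<in>input_dists. mutual_info P W = capacity W \<and> (\<forall>x. 0 < P x)"
    and "max_kl W < \<infinity>"
    and "\<forall>N. 0 < \<rho> N"
    and "\<rho> \<longlonglongrightarrow> 0"
    and "filterlim (\<lambda>N. \<rho> N * sqrt (real N)) at_top sequentially"
  shows "E_star W \<rho> \<le> max_kl W / ereal (capacity W)"
proof -
  obtain B where mB: "max_kl W = ereal B" and B0: "0 \<le> B"
    and KL: "\<And>x x'. (\<Sum>y\<in>UNIV. W x y * ln (W x y / W x' y)) \<le> B"
    and abs_cont: "\<And>x x' y. 0 < W x y \<Longrightarrow> W x' y \<noteq> 0"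
    using finite_max_kl[OF assms(4)] by blast
  obtain lam where lam1: "1 \<le> lam" and ratio: "\<And>x x' y. W x y \<le> lam * W x' y"
    using bounded_likelihood_ratio[of W] abs_cont assms(1) unfolding stoch_matrix_def by blast
  have "E \<le> B / capacity W" if ach: "md_achievable W \<rho> E" for E
  proof (cases "0 < E")
    case True
    show ?thesis
    proof (rule dense_le_bounded[OF True])
      fix E' assume "0 < E'" "E' < E"
      thus "E' \<le> B / capacity W"
        using md_achievable_exponent_le[OF assms(1,2) ratio lam1 KL B0 assms(5-7) ach] assms(2)
        by (simp add: pos_le_divide_eq mult.commute)
    qed
  next
    case False
    moreover have "0 \<le> B / capacity W" using B0 assms(2) by simp
    ultimately show ?thesis by linarith
  qed
  hence "E_star W \<rho> \<le> ereal (B / capacity W)"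
    unfolding E_star_def by (intro Sup_least) auto
  thus ?thesis using mB assms(2) by simp
qed

end
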